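(* Let $G$ be a locally compact group and $K$ a compact subgroup with normalized Haar measure $dk$ such that $(G,K)$ is a central pair. Let $\omega, f\in\mathcal{C}(G)$ with $\omega$ $K$-central. Then the pair $(\omega,f)$ satisfies $$\int_K\omega(xkyk^{-1})\,dk+\int_K\omega(ykxk^{-1})\,dk=2\omega(x)f(y)+2\omega(y)f(x)\quad\text{for all }x,y\in G$$ if and only if it satisfies $$\int_K\omega(xkyk^{-1})\,dk=\omega(x)f(y)+\omega(y)f(x)\quad\text{for all }x,y\in G.$$
   Context: A function $f$ on $G$ is $K$-central if $f(kx)=f(xk)$ for all $k\in K,x\in G$. Let $\mathcal{K}_K(G)$ be the space of continuous compactly supported $K$-central functions on $G$; it is an algebra under convolution. $(G,K)$ is a central pair if $(\mathcal{K}_K(G),\star)$ is commutative. $\mathcal{C}(G)$ is the space of complex continuous functions on $G$. *)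

theory Defs
  imports "HOL-Analysis.Analysis"
begin

definition locally_compact_group ::
  "('g::t2_space \<Rightarrow> 'g \<Rightarrow> 'g) \<Rightarrow> 'g \<Rightarrow> ('g \<Rightarrow> 'g) \<Rightarrow> bool" where
  "locally_compact_group mul e iv \<longleftrightarrow>
     (\<forall>x y z. mul (mul x y) z = mul x (mul y z)) \<and>
     (\<forall>x. mul e x = x \<and> mul x e = x) \<and>
     (\<forall>x. mul (iv x) x = e \<and> mul x (iv x) = e) \<and>
     continuous_on UNIV (\<lambda>p::'g \<times> 'g. mul (fst p) (snd p)) \<and>
     continuous_on UNIV iv \<and>
     (\<forall>x. \<exists>(U::'g set) (C::'g set). open U \<and> compact C \<and> x \<in> U \<and> U \<subseteq> C)"

definition compact_subgroup ::
  "('g::topological_space \<Rightarrow> 'g \<Rightarrow> 'g) \<Rightarrow> 'g \<Rightarrow> ('g \<Rightarrow> 'g) \<Rightarrow> 'g set \<Rightarrow> bool" where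
  "compact_subgroup mul e iv K \<longleftrightarrow>
     compact K \<and> e \<in> K \<and> (\<forall>x\<in>K. \<forall>y\<in>K. mul x y \<in> K) \<and> (\<forall>x\<in>K. iv x \<in> K)"

definition left_haar_measure ::
  "('g::topological_space \<Rightarrow> 'g \<Rightarrow> 'g) \<Rightarrow> 'g measure \<Rightarrow> bool" where
  "left_haar_measure mul mu \<longleftrightarrow>
     sets mu = sets borel \<and>
     (\<forall>C. compact C \<longrightarrow> emeasure mu C < \<infinity>) \<and>
     (\<forall>U. open U \<and> U \<noteq> {} \<longrightarrow> emeasure mu U > 0) \<and>
     (\<forall>g. \<forall>A\<in>sets mu. emeasure mu (mul g ` A) = emeasure mu A) \<and>
     (\<forall>A\<in>sets mu. emeasure mu A = (INF U\<in>{U. open U \<and> A \<subseteq> U}. emeasure mu U)) \<and>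
     (\<forall>U. open U \<longrightarrow> emeasure mu U = (SUP C\<in>{C. compact C \<and> C \<subseteq> U}. emeasure mu C))"

text \<open>Normalized Haar measure dk of the compact subgroup K, viewed as a Borel
  probability measure on G concentrated on K and invariant under left translation
  by elements of K.\<close>
definition normalized_haar_on ::
  "('g::topological_space \<Rightarrow> 'g \<Rightarrow> 'g) \<Rightarrow> 'g set \<Rightarrow> 'g measure \<Rightarrow> bool" where
  "normalized_haar_on mul K dk \<longleftrightarrow>
     sets dk = sets borel \<and> emeasure dk UNIV = 1 \<and> emeasure dk (UNIV - K) = 0 \<and>
     (\<forall>k\<in>K. \<forall>A\<in>sets dk. emeasure dk (mul k ` A) = emeasure dk A)"

definition K_central ::
  "('g \<Rightarrow> 'g \<Rightarrow> 'g) \<Rightarrow> 'g set \<Rightarrow> ('g \<Rightarrow> 'c) \<Rightarrow> bool" where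
  "K_central mul K f \<longleftrightarrow> (\<forall>k\<in>K. \<forall>x. f (mul k x) = f (mul x k))"

definition KK_space ::
  "('g::topological_space \<Rightarrow> 'g \<Rightarrow> 'g) \<Rightarrow> 'g set \<Rightarrow> ('g \<Rightarrow> complex) set" where
  "KK_space mul K = {f. continuous_on UNIV f \<and>
       (\<exists>C. compact C \<and> (\<forall>x. x \<notin> C \<longrightarrow> f x = 0)) \<and> K_central mul K f}"

definition convolution ::
  "('g \<Rightarrow> 'g \<Rightarrow> 'g) \<Rightarrow> ('g \<Rightarrow> 'g) \<Rightarrow> 'g measure \<Rightarrow> ('g \<Rightarrow> complex) \<Rightarrow> ('g \<Rightarrow> complex) \<Rightarrow> 'g \<Rightarrow> complex" where
  "convolution mul iv mu f g x = (\<integral>y. f y * g (mul (iv y) x) \<partial>mu)"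

definition central_pair ::
  "('g::topological_space \<Rightarrow> 'g \<Rightarrow> 'g) \<Rightarrow> ('g \<Rightarrow> 'g) \<Rightarrow> 'g measure \<Rightarrow> 'g set \<Rightarrow> bool" where
  "central_pair mul iv mu K \<longleftrightarrow>
     (\<forall>f\<in>KK_space mul K. \<forall>g\<in>KK_space mul K.
        convolution mul iv mu f g = convolution mul iv mu g f)"

end

theory Submission
  imports Defs
begin

text \<open>Everything rests on the symmetry of \<open>\<Phi>(x,y) = \<integral>\<^sub>K \<omega>(x k y k\<^sup>-\<^sup>1) dk\<close>: once
  \<open>\<Phi>(x,y) = \<Phi>(y,x)\<close>, the two functional equations are trivially equivalent. To prove it, take a
  bump \<open>\<rho>\<close> at \<open>e\<close>, invariant under conjugation by \<open>K\<close> and supported in a small neighbourhood,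
  and let \<open>g\<^sub>x\<close> be the \<open>K\<close>-average of the left translates of \<open>\<rho>\<close> by the conjugates of \<open>x\<close>.
  Then \<open>g\<^sub>x\<close> is continuous, compactly supported and \<open>K\<close>-central, and Fubini together with the
  invariance of the Haar measures turns \<open>\<integral> \<omega> (g\<^sub>x \<star> g\<^sub>y)\<close> into \<open>\<integral> g\<^sub>x(u) \<integral> g\<^sub>y(v) \<omega>(u v)\<close>.
  By uniform continuity of \<open>\<omega>\<close> on compact sets this is \<open>(\<integral>\<rho>)\<^sup>2 \<Phi>(x,y)\<close> up to an error that
  vanishes as the support of \<open>\<rho>\<close> shrinks. Since \<open>(G,K)\<close> is a central pair,
  \<open>g\<^sub>x \<star> g\<^sub>y = g\<^sub>y \<star> g\<^sub>x\<close>, which exchanges \<open>x\<close> and \<open>y\<close>.\<close>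

locale lc_group =
  fixes mul :: "'g::t2_space \<Rightarrow> 'g \<Rightarrow> 'g" and e :: 'g and iv :: "'g \<Rightarrow> 'g"
  assumes lc_group: "locally_compact_group mul e iv"
begin

lemma assoc: "mul (mul x y) z = mul x (mul y z)"
  using lc_group unfolding locally_compact_group_def by blast
lemma lid [simp]: "mul e x = x"
  using lc_group unfolding locally_compact_group_def by blast
lemma rid [simp]: "mul x e = x"
  using lc_group unfolding locally_compact_group_def by blast
lemma linv [simp]: "mul (iv x) x = e"
  using lc_group unfolding locally_compact_group_def by blast
lemma rinv [simp]: "mul x (iv x) = e"
  using lc_group unfolding locally_compact_group_def by blast
lemma linv_mul [simp]: "mul (iv x) (mul x y) = y"
  by (metis assoc lid linv)
lemma rinv_mul [simp]: "mul x (mul (iv x) y) = y"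
  by (metis assoc lid rinv)
lemma inv_unique: "mul x y = e \<Longrightarrow> iv x = y"
  by (metis linv_mul rid)
lemma iv_iv [simp]: "iv (iv x) = x"
  by (metis inv_unique linv)
lemma iv_mul: "iv (mul a b) = mul (iv b) (iv a)"
  by (rule inv_unique) (simp add: assoc)

lemma continuous_on_mul_pair: "continuous_on UNIV (\<lambda>p::'g \<times> 'g. mul (fst p) (snd p))"
  using lc_group unfolding locally_compact_group_def by blast

lemma continuous_on_iv_UNIV: "continuous_on UNIV iv"
  using lc_group unfolding locally_compact_group_def by blast

lemma continuous_on_mul:
  "continuous_on S f \<Longrightarrow> continuous_on S g \<Longrightarrow> continuous_on S (\<lambda>p. mul (f p) (g p))"
  using continuous_on_compose2[OF continuous_on_mul_pair continuous_on_Pair, of S f g] by auto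

lemma continuous_on_iv: "continuous_on S f \<Longrightarrow> continuous_on S (\<lambda>p. iv (f p))"
  using continuous_on_compose2[OF continuous_on_iv_UNIV, of S f] by auto

lemmas group_continuous_intros = continuous_on_mul continuous_on_iv
  continuous_on_fst continuous_on_snd continuous_on_id continuous_on_const

lemma locally_compact_nhd: "\<exists>(U::'g set) (C::'g set). open U \<and> compact C \<and> x \<in> U \<and> U \<subseteq> C"
  using lc_group unfolding locally_compact_group_def by blast

lemma completely_regular_euclidean: "completely_regular_space (euclidean::'g topology)"
proof -
  have "locally_compact_space (euclidean::'g topology)"
    unfolding locally_compact_space_def using locally_compact_nhd by auto
  moreover have "Hausdorff_space (euclidean::'g topology)"
    unfolding Hausdorff_space_def disjnt_def by (simp, meson hausdorff)
  ultimately show ?thesis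
    by (simp add: locally_compact_regular_imp_completely_regular_space)
qed

end

definition finite_on_compact :: "'a::t2_space measure \<Rightarrow> 'a set \<Rightarrow> bool" where
  "finite_on_compact M C \<longleftrightarrow>
     sets M = sets borel \<and> emeasure M UNIV < \<infinity> \<and> compact C \<and> emeasure M (UNIV - C) = 0"

context
  fixes M :: "'a::t2_space measure" and C :: "'a set"
  assumes M: "finite_on_compact M C"
begin

lemma finite_on_compact_sets: "sets M = sets borel"
  using M by (simp add: finite_on_compact_def)

lemma finite_on_compact_space: "space M = UNIV"
  by (metis finite_on_compact_sets sets_eq_imp_space_eq space_borel)

lemma finite_on_compact_finite_measure: "finite_measure M"
  using M finite_on_compact_space by (intro finite_measureI) (auto simp: finite_on_compact_def)

lemma AE_finite_on_compact: "AE x in M. x \<in> C"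
proof -
  have "closed C" using M by (simp add: finite_on_compact_def compact_imp_closed)
  then have "UNIV - C \<in> null_sets M"
    using M by (simp add: null_setsI finite_on_compact_def finite_on_compact_sets)
  then show ?thesis by (rule AE_I') (auto simp: finite_on_compact_space)
qed

lemma finite_on_compact_measurable:
  "continuous_on UNIV f \<Longrightarrow> f \<in> borel_measurable M"
  using borel_measurable_continuous_onI measurable_cong_sets finite_on_compact_sets by metis

lemma finite_on_compact_integrable:
  fixes f :: "'a \<Rightarrow> 'b::{banach,second_countable_topology}"
  assumes f: "continuous_on UNIV f"
  shows "integrable M f"
proof -
  interpret finite_measure M by (rule finite_on_compact_finite_measure)
  have "compact (f ` C)"
    using M f by (auto simp: finite_on_compact_def intro: compact_continuous_image continuous_on_subset)
  then obtain B where "\<And>y. y \<in> f ` C \<Longrightarrow> norm y \<le> B"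
    by (meson bounded_iff compact_imp_bounded)
  then show ?thesis
    using AE_finite_on_compact finite_on_compact_measurable[OF f]
    by (intro integrable_const_bound[of f B]) auto
qed

lemma finite_on_compact_norm_integral_bound:
  fixes f :: "'a \<Rightarrow> 'b::{banach,second_countable_topology}"
  assumes f: "integrable M f" and B: "\<And>x. x \<in> C \<Longrightarrow> norm (f x) \<le> B"
  shows "norm (integral\<^sup>L M f) \<le> B * measure M UNIV"
proof -
  interpret finite_measure M by (rule finite_on_compact_finite_measure)
  have "norm (integral\<^sup>L M f) \<le> (\<integral>x. norm (f x) \<partial>M)"
    by (rule integral_norm_bound)
  also have "\<dots> \<le> (\<integral>x. B \<partial>M)"
    by (rule integral_mono_AE) (use f AE_finite_on_compact B in auto)
  also have "\<dots> = B * measure M UNIV"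
    by (simp add: finite_on_compact_space)
  finally show ?thesis .
qed

text \<open>Continuity in the parameter comes from uniform continuity on the tubes \<open>X \<times> C\<close>.\<close>
lemma continuous_on_parametric_integral:
  fixes F :: "'p::t2_space \<times> 'a \<Rightarrow> 'b::{banach,second_countable_topology}"
  assumes F: "continuous_on UNIV F"
  shows "continuous_on UNIV (\<lambda>p. \<integral>b. F (p, b) \<partial>M)"
proof (rule continuous_at_imp_continuous_on, intro ballI)
  fix p0 :: 'p
  have Fp: "continuous_on UNIV (\<lambda>b. F (p, b))" for p
    by (rule continuous_on_compose2[OF F]) (auto intro!: continuous_intros)
  have intF: "integrable M (\<lambda>b. F (p, b))" for p
    by (rule finite_on_compact_integrable[OF Fp])
  define m where "m = measure M UNIV"
  have m0: "m \<ge> 0" by (simp add: m_def)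
  show "isCont (\<lambda>p. \<integral>b. F (p, b) \<partial>M) p0" unfolding isCont_def
  proof (rule tendsto_at_iff_tendsto_nhds[THEN iffD2], rule tendstoI)
    fix \<epsilon> :: real assume \<epsilon>: "\<epsilon> > 0"
    define d where "d = \<epsilon> / (m + 1)"
    have d: "d > 0" using \<epsilon> m0 by (simp add: d_def)
    define W where "W = (\<lambda>q. dist (F q) (F (p0, snd q))) -` {..<d}"
    have "continuous_on UNIV (\<lambda>q::'p \<times> 'a. dist (F q) (F (p0, snd q)))"
      by (intro continuous_intros F continuous_on_compose2[OF F]) auto
    then have "open W"
      unfolding W_def by (intro open_vimage) auto
    moreover have "{p0} \<times> C \<subseteq> W" using d by (auto simp: W_def)
    ultimately obtain X where X: "p0 \<in> X" "open X" "X \<times> C \<subseteq> W"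
      using Elementary_Topology.tube_lemma[of C W p0] M by (auto simp: finite_on_compact_def)
    have "dist (\<integral>b. F (p, b) \<partial>M) (\<integral>b. F (p0, b) \<partial>M) < \<epsilon>" if p: "p \<in> X" for p
    proof -
      have "dist (\<integral>b. F (p, b) \<partial>M) (\<integral>b. F (p0, b) \<partial>M) = norm (\<integral>b. F (p, b) - F (p0, b) \<partial>M)"
        by (simp add: dist_norm intF)
      also have "\<dots> \<le> d * m" unfolding m_def
        by (rule finite_on_compact_norm_integral_bound) (use intF X p in \<open>auto simp: W_def dist_norm\<close>)
      also have "\<dots> < \<epsilon>" using \<epsilon> m0 by (simp add: d_def field_simps)
      finally show ?thesis .
    qed
    then show "\<forall>\<^sub>F p in nhds p0. dist (\<integral>b. F (p, b) \<partial>M) (\<integral>b. F (p0, b) \<partial>M) < \<epsilon>"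
      using X by (auto simp: eventually_nhds)
  qed
qed

end

lemma completely_regular_separating_function:
  fixes a a' :: "'a::t1_space"
  assumes "completely_regular_space (euclidean::'a topology)" and "a \<noteq> a'"
  obtains \<phi> :: "'a \<Rightarrow> real" where "continuous_on UNIV \<phi>" "\<phi> a \<noteq> \<phi> a'"
proof -
  have "closedin euclidean {a'}" by simp
  then obtain f where f: "continuous_map euclidean (top_of_set {0..1}) f" "f a = (0::real)" "f ` {a'} \<subseteq> {1}"
    using assms unfolding completely_regular_space_def by (metis Diff_iff UNIV_I singletonD topspace_euclidean)
  then have "continuous_on UNIV f"
    using continuous_map_into_fulltopology continuous_map_iff_continuous2 by blast
  with f show ?thesis by (intro that[of f]) auto
qed

lemma borel_measurable_indicator_uniform_limit:
  fixes F :: "'a \<Rightarrow> real"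
  assumes S: "S \<in> sets M" and g: "\<And>n. g n \<in> borel_measurable M"
    and approx: "\<And>n x. x \<in> S \<Longrightarrow> \<bar>F x - g n x\<bar> < 1 / Suc n"
  shows "(\<lambda>x. indicator S x * F x) \<in> borel_measurable M"
proof (rule borel_measurable_LIMSEQ_real[where u="\<lambda>n x. indicator S x * g n x"])
  show "(\<lambda>x. indicator S x * g n x) \<in> borel_measurable M" for n
    using S g[of n] by simp
  fix x
  have "(\<lambda>n. g n x) \<longlonglongrightarrow> F x" if x: "x \<in> S"
  proof (rule LIM_zero_cancel, rule Lim_null_comparison)
    show "\<forall>\<^sub>F n in sequentially. norm (g n x - F x) \<le> 1 / Suc n"
      using approx[OF x] by (auto simp: abs_minus_commute less_imp_le)
    show "(\<lambda>n. 1 / real (Suc n)) \<longlonglongrightarrow> 0"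
      by (rule LIMSEQ_Suc[OF lim_const_over_n])
  qed
  then show "(\<lambda>n. indicator S x * g n x) \<longlonglongrightarrow> indicator S x * F x"
    by (cases "x \<in> S") auto
qed

lemma function_ring_on_continuous_measurable:
  assumes cr: "completely_regular_space (euclidean::'a::t2_space topology)"
    "completely_regular_space (euclidean::'b::t2_space topology)"
    and AB: "compact (A \<times> B)"
  shows "function_ring_on
    {f :: 'a \<times> 'b \<Rightarrow> real. continuous_on UNIV f \<and> f \<in> borel_measurable (borel \<Otimes>\<^sub>M borel)} (A \<times> B)"
    (is "function_ring_on ?R _")
proof
  have fst_R: "(\<lambda>p. \<phi> (fst p)) \<in> ?R" if \<phi>: "continuous_on UNIV \<phi>" for \<phi> :: "'a \<Rightarrow> real"
    using continuous_on_compose2[OF \<phi> continuous_on_fst[OF continuous_on_id]]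
      measurable_compose[OF measurable_fst borel_measurable_continuous_onI[OF \<phi>]] by blast
  have snd_R: "(\<lambda>p. \<psi> (snd p)) \<in> ?R" if \<psi>: "continuous_on UNIV \<psi>" for \<psi> :: "'b \<Rightarrow> real"
    using continuous_on_compose2[OF \<psi> continuous_on_snd[OF continuous_on_id]]
      measurable_compose[OF measurable_snd borel_measurable_continuous_onI[OF \<psi>]] by blast
  show "compact (A \<times> B)" by (rule AB)
  show "continuous_on (A \<times> B) f" if "f \<in> ?R" for f
    using that continuous_on_subset by auto
  show "(\<lambda>x. f x + g x) \<in> ?R" if "f \<in> ?R" "g \<in> ?R" for f g
    using that by (blast intro: continuous_on_add borel_measurable_add)
  show "(\<lambda>x. f x * g x) \<in> ?R" if "f \<in> ?R" "g \<in> ?R" for f g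
    using that by (blast intro: continuous_on_mult borel_measurable_times)
  show "(\<lambda>_. c) \<in> ?R" for c
    by (blast intro: continuous_on_const borel_measurable_const)
  show "\<exists>f\<in>?R. f x \<noteq> f y" if "x \<noteq> y" for x y
  proof (cases "fst x = fst y")
    case False
    then obtain \<phi> :: "'a \<Rightarrow> real" where "continuous_on UNIV \<phi>" "\<phi> (fst x) \<noteq> \<phi> (fst y)"
      using completely_regular_separating_function[OF cr(1)] by metis
    then show ?thesis using fst_R by (intro bexI[of _ "\<lambda>p. \<phi> (fst p)"]) auto
  next
    case True
    then have "snd x \<noteq> snd y" using that by (simp add: prod_eq_iff)
    then obtain \<psi> :: "'b \<Rightarrow> real" where "continuous_on UNIV \<psi>" "\<psi> (snd x) \<noteq> \<psi> (snd y)"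
      using completely_regular_separating_function[OF cr(2)] by metis
    then show ?thesis using snd_R by (intro bexI[of _ "\<lambda>p. \<psi> (snd p)"]) auto
  qed
qed

text \<open>On non-second-countable spaces \<open>borel \<Otimes>\<^sub>M borel\<close> may be smaller than the Borel algebra of
  the product, so measurability of continuous functions on a product is not automatic. By
  Stone--Weierstrass, on a compact rectangle they are uniform limits of functions generated by
  continuous functions of a single coordinate.\<close>
lemma borel_measurable_indicator_Times_continuous_real:
  fixes F :: "'a::t2_space \<times> 'b::t2_space \<Rightarrow> real"
  assumes cr: "completely_regular_space (euclidean::'a topology)"
    "completely_regular_space (euclidean::'b topology)"
    and F: "continuous_on UNIV F" and A: "compact A" and B: "compact B"
  shows "(\<lambda>p. indicator (A \<times> B) p * F p) \<in> borel_measurable (borel \<Otimes>\<^sub>M borel)"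
proof -
  interpret function_ring_on
    "{f :: 'a \<times> 'b \<Rightarrow> real. continuous_on UNIV f \<and> f \<in> borel_measurable (borel \<Otimes>\<^sub>M borel)}" "A \<times> B"
    by (rule function_ring_on_continuous_measurable[OF cr compact_Times[OF A B]])
  have "\<forall>n::nat. \<exists>g. continuous_on UNIV g \<and> g \<in> borel_measurable (borel \<Otimes>\<^sub>M borel) \<and>
      (\<forall>x\<in>A \<times> B. \<bar>F x - g x\<bar> < 1 / Suc n)"
    using Stone_Weierstrass_basic[OF continuous_on_subset[OF F]] by auto
  then obtain g where g: "\<And>n. g n \<in> borel_measurable (borel \<Otimes>\<^sub>M borel)"
    "\<And>n x. x \<in> A \<times> B \<Longrightarrow> \<bar>F x - g n x\<bar> < 1 / Suc n"
    by metis
  have "A \<times> B \<in> sets (borel \<Otimes>\<^sub>M borel)"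
    using A B by (intro pair_measureI) (auto simp: compact_imp_closed)
  then show ?thesis
    using g by (rule borel_measurable_indicator_uniform_limit)
qed

lemma borel_measurable_indicator_Times_continuous:
  fixes F :: "'a::t2_space \<times> 'b::t2_space \<Rightarrow> complex"
  assumes cr: "completely_regular_space (euclidean::'a topology)"
    "completely_regular_space (euclidean::'b topology)"
    and F: "continuous_on UNIV F" and A: "compact A" and B: "compact B"
  shows "(\<lambda>p. indicator (A \<times> B) p * F p) \<in> borel_measurable (borel \<Otimes>\<^sub>M borel)"
proof -
  have "(\<lambda>p. indicator (A \<times> B) p * Re (F p)) \<in> borel_measurable (borel \<Otimes>\<^sub>M borel)"
    "(\<lambda>p. indicator (A \<times> B) p * Im (F p)) \<in> borel_measurable (borel \<Otimes>\<^sub>M borel)"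
    by (rule borel_measurable_indicator_Times_continuous_real[OF cr _ A B]; intro continuous_intros F)+
  moreover have "(\<lambda>p. Re (indicator (A \<times> B) p * F p)) = (\<lambda>p. indicator (A \<times> B) p * Re (F p))"
    "(\<lambda>p. Im (indicator (A \<times> B) p * F p)) = (\<lambda>p. indicator (A \<times> B) p * Im (F p))"
    by (auto simp: indicator_def)
  ultimately show ?thesis by (simp add: borel_measurable_complex_iff)
qed

lemma integral_integral_indicator_Times:
  fixes F :: "'a::t2_space \<times> 'b::t2_space \<Rightarrow> complex"
  assumes M: "finite_on_compact M A" and N: "finite_on_compact N B" and F: "continuous_on UNIV F"
    and H: "(\<lambda>p. indicator (A \<times> B) p * F p) \<in> borel_measurable (M \<Otimes>\<^sub>M N)"
  shows "(\<integral>a. \<integral>b. indicator (A \<times> B) (a, b) * F (a, b) \<partial>N \<partial>M) = (\<integral>a. \<integral>b. F (a, b) \<partial>N \<partial>M)"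
proof (rule integral_cong_AE)
  interpret N: finite_measure N by (rule finite_on_compact_finite_measure[OF N])
  have F1: "continuous_on UNIV (\<lambda>b. F (a, b))" for a
    by (rule continuous_on_compose2[OF F]) (auto intro!: continuous_intros)
  show "(\<lambda>a. \<integral>b. indicator (A \<times> B) (a, b) * F (a, b) \<partial>N) \<in> borel_measurable M"
    using H by (intro N.borel_measurable_lebesgue_integral) (simp add: case_prod_beta')
  show "(\<lambda>a. \<integral>b. F (a, b) \<partial>N) \<in> borel_measurable M"
    by (rule finite_on_compact_measurable[OF M continuous_on_parametric_integral[OF N F]])
  show "AE a in M. (\<integral>b. indicator (A \<times> B) (a, b) * F (a, b) \<partial>N) = (\<integral>b. F (a, b) \<partial>N)"
    using AE_finite_on_compact[OF M]
  proof eventually_elim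
    case (elim a)
    show ?case
    proof (rule integral_cong_AE)
      show "(\<lambda>b. indicator (A \<times> B) (a, b) * F (a, b)) \<in> borel_measurable N"
        using measurable_Pair2[OF H, of a] finite_on_compact_space[OF M] by simp
      show "AE b in N. indicator (A \<times> B) (a, b) * F (a, b) = F (a, b)"
        using AE_finite_on_compact[OF N] by eventually_elim (use elim in simp)
    qed (rule finite_on_compact_measurable[OF N F1])
  qed
qed

lemma Fubini_continuous:
  fixes F :: "'a::t2_space \<times> 'b::t2_space \<Rightarrow> complex"
  assumes cr: "completely_regular_space (euclidean::'a topology)"
    "completely_regular_space (euclidean::'b topology)"
    and M: "finite_on_compact M A" and N: "finite_on_compact N B" and F: "continuous_on UNIV F"
  shows "(\<integral>a. \<integral>b. F (a, b) \<partial>N \<partial>M) = (\<integral>b. \<integral>a. F (a, b) \<partial>M \<partial>N)"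
proof -
  interpret M: finite_measure M by (rule finite_on_compact_finite_measure[OF M])
  interpret N: finite_measure N by (rule finite_on_compact_finite_measure[OF N])
  interpret P: pair_sigma_finite M N by unfold_locales
  interpret PF: finite_measure "M \<Otimes>\<^sub>M N"
    by (rule finite_measure_pair_measure) unfold_locales
  define H where "H p = indicator (A \<times> B) p * F p" for p
  have AB: "compact A" "compact B" using M N by (auto simp: finite_on_compact_def)
  have "sets (M \<Otimes>\<^sub>M N) = sets (borel \<Otimes>\<^sub>M borel)"
    by (rule sets_pair_measure_cong) (use M N in \<open>auto simp: finite_on_compact_sets\<close>)
  then have Hm: "H \<in> borel_measurable (M \<Otimes>\<^sub>M N)"
    unfolding H_def using borel_measurable_indicator_Times_continuous[OF cr F AB] measurable_cong_sets
    by blast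
  have "compact (F ` (A \<times> B))"
    using AB F by (auto intro: compact_continuous_image continuous_on_subset compact_Times)
  then obtain c where c: "\<And>y. y \<in> F ` (A \<times> B) \<Longrightarrow> norm y \<le> c"
    by (meson bounded_iff compact_imp_bounded)
  have "norm (H p) \<le> max c 0" for p
    using c[of "F p"] by (auto simp: H_def indicator_def)
  then have "integrable (M \<Otimes>\<^sub>M N) (\<lambda>(a, b). H (a, b))"
    using Hm by (intro PF.integrable_const_bound[where B="max c 0"]) auto
  then have Fubini_H: "(\<integral>a. \<integral>b. H (a, b) \<partial>N \<partial>M) = (\<integral>b. \<integral>a. H (a, b) \<partial>M \<partial>N)"
    using P.Fubini_integral[of "\<lambda>a b. H (a, b)"] by simp
  have Fswap: "continuous_on UNIV (\<lambda>q. F (snd q, fst q))"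
    by (rule continuous_on_compose2[OF F]) (auto intro!: continuous_intros)
  have H_swap: "indicator (B \<times> A) (b, a) * F (a, b) = H (a, b)" for a b
    by (auto simp: H_def indicator_def)
  have "(\<lambda>q. indicator (B \<times> A) q * F (snd q, fst q)) = (\<lambda>q. H (snd q, fst q))"
    using H_swap by auto
  then have "(\<lambda>q. indicator (B \<times> A) q * F (snd q, fst q)) \<in> borel_measurable (N \<Otimes>\<^sub>M M)"
    using measurable_compose[OF measurable_pair_swap' Hm] by (simp add: case_prod_beta)
  from integral_integral_indicator_Times[OF N M Fswap this]
  have "(\<integral>b. \<integral>a. H (a, b) \<partial>M \<partial>N) = (\<integral>b. \<integral>a. F (a, b) \<partial>M \<partial>N)"
    by (simp add: H_swap)
  moreover have "(\<integral>a. \<integral>b. H (a, b) \<partial>N \<partial>M) = (\<integral>a. \<integral>b. F (a, b) \<partial>N \<partial>M)"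
    using integral_integral_indicator_Times[OF M N F Hm[unfolded H_def[abs_def]]] by (simp add: H_def)
  ultimately show ?thesis using Fubini_H by simp
qed

context lc_group
begin

lemma vimage_mul: "mul a -` A = mul (iv a) ` A"
proof safe
  fix x assume "mul a x \<in> A"
  then show "x \<in> mul (iv a) ` A" by (intro image_eqI[of _ _ "mul a x"]) auto
qed auto

lemma integral_left_translate:
  fixes f :: "'g \<Rightarrow> 'b::{banach,second_countable_topology}"
  assumes M: "sets M = sets borel"
    and inv: "\<And>A. A \<in> sets M \<Longrightarrow> emeasure M (mul (iv a) ` A) = emeasure M A"
    and f: "f \<in> borel_measurable borel"
  shows "(\<integral>u. f (mul a u) \<partial>M) = integral\<^sup>L M f"
proof -
  have space: "space M = UNIV" by (metis M sets_eq_imp_space_eq space_borel)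
  have mul_meas: "mul a \<in> measurable M borel"
    using M by (simp add: measurable_cong_sets[OF M refl] borel_measurable_continuous_onI
        group_continuous_intros)
  have "distr M borel (mul a) = M"
  proof (rule measure_eqI)
    fix A assume "A \<in> sets (distr M borel (mul a))"
    then have A: "A \<in> sets M" by (simp add: M)
    have "emeasure (distr M borel (mul a)) A = emeasure M (mul a -` A \<inter> space M)"
      using A M mul_meas by (intro emeasure_distr) auto
    also have "\<dots> = emeasure M A" by (simp add: space vimage_mul inv[OF A])
    finally show "emeasure (distr M borel (mul a)) A = emeasure M A" .
  qed (simp add: M)
  then have "integral\<^sup>L M f = integral\<^sup>L (distr M borel (mul a)) f" by simp
  also have "\<dots> = (\<integral>u. f (mul a u) \<partial>M)"
    using mul_meas f by (intro integral_distr) auto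
  finally show ?thesis by simp
qed

lemma K_central_conj:
  assumes "K_central mul K \<omega>" "k \<in> K"
  shows "\<omega> (mul k (mul a (iv k))) = \<omega> a"
proof -
  have "\<omega> (mul k (mul a (iv k))) = \<omega> (mul (mul a (iv k)) k)"
    using assms unfolding K_central_def by blast
  then show ?thesis by (simp add: assoc)
qed

lemma uniform_continuity_at_unit:
  fixes \<Gamma> :: "'p::t2_space \<times> 'g \<Rightarrow> complex"
  assumes P: "compact P" and \<Gamma>: "continuous_on UNIV \<Gamma>" and \<epsilon>: "\<epsilon> > 0"
  obtains V where "open V" "e \<in> V" "\<And>p w. p \<in> P \<Longrightarrow> w \<in> V \<Longrightarrow> norm (\<Gamma> (p, w) - \<Gamma> (p, e)) \<le> \<epsilon>"
proof -
  define W where "W = (\<lambda>q::'g \<times> 'p. norm (\<Gamma> (snd q, fst q) - \<Gamma> (snd q, e))) -` {..<\<epsilon>}"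
  have "continuous_on UNIV (\<lambda>q::'g \<times> 'p. norm (\<Gamma> (snd q, fst q) - \<Gamma> (snd q, e)))"
    by (intro continuous_intros continuous_on_compose2[OF \<Gamma>]) auto
  then have "open W" unfolding W_def by (intro open_vimage) auto
  moreover have "{e} \<times> P \<subseteq> W" using \<epsilon> by (auto simp: W_def)
  ultimately obtain V where "e \<in> V" "open V" "V \<times> P \<subseteq> W"
    using Elementary_Topology.tube_lemma[OF P] by metis
  then show ?thesis by (intro that[of V]) (force simp: W_def)+
qed

lemma exists_bump:
  assumes W: "open W" "e \<in> W"
  obtains \<sigma> :: "'g \<Rightarrow> real" and C where "continuous_on UNIV \<sigma>" "\<And>x. 0 \<le> \<sigma> x" "\<sigma> e = 1"
    "\<And>x. x \<notin> W \<Longrightarrow> \<sigma> x = 0" "compact C" "\<And>x. x \<notin> C \<Longrightarrow> \<sigma> x = 0"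
proof -
  obtain U C where UC: "open U" "compact C" "e \<in> U" "U \<subseteq> C" using locally_compact_nhd by blast
  define W' where "W' = U \<inter> W"
  have "closedin euclidean (UNIV - W')" using UC W by (auto simp: W'_def)
  moreover have "e \<in> topspace euclidean - (UNIV - W')" using UC W by (auto simp: W'_def)
  ultimately obtain f where f: "continuous_map euclidean (top_of_set {0..1}) f" "f e = (0::real)"
    "f ` (UNIV - W') \<subseteq> {1}"
    using completely_regular_euclidean unfolding completely_regular_space_def by blast
  have fc: "continuous_on UNIV f"
    using f(1) continuous_map_into_fulltopology continuous_map_iff_continuous2 by blast
  have fr: "f x \<in> {0..1}" for x
    using continuous_map_image_subset_topspace[OF f(1)] by (simp add: image_subset_iff)
  show ?thesis
  proof (rule that[of "\<lambda>x. 1 - f x" C])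
    show "continuous_on UNIV (\<lambda>x. 1 - f x)" by (intro continuous_intros fc)
    show "0 \<le> 1 - f x" for x using fr[of x] by auto
    show "1 - f e = 1" using f(2) by simp
    show "1 - f x = 0" if "x \<notin> W" for x using f(3) that by (auto simp: W'_def)
    show "1 - f x = 0" if "x \<notin> C" for x using f(3) that UC by (auto simp: W'_def)
  qed (rule UC(2))
qed

end

locale haar_setting = lc_group mul e iv
  for mul :: "'g::t2_space \<Rightarrow> 'g \<Rightarrow> 'g" and e iv +
  fixes mu dk :: "'g measure" and K :: "'g set"
  assumes haar: "left_haar_measure mul mu" and K_subgroup: "compact_subgroup mul e iv K"
    and dk_haar: "normalized_haar_on mul K dk"
begin

lemma K_compact: "compact K" using K_subgroup by (simp add: compact_subgroup_def)
lemma K_e [simp]: "e \<in> K" using K_subgroup by (simp add: compact_subgroup_def)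
lemma K_mul [simp]: "a \<in> K \<Longrightarrow> b \<in> K \<Longrightarrow> mul a b \<in> K" using K_subgroup by (simp add: compact_subgroup_def)
lemma K_iv [simp]: "a \<in> K \<Longrightarrow> iv a \<in> K" using K_subgroup by (simp add: compact_subgroup_def)

lemma mu_sets: "sets mu = sets borel"
  using haar[unfolded left_haar_measure_def] by (rule conjunct1)
lemma mu_space: "space mu = UNIV"
  by (metis mu_sets sets_eq_imp_space_eq space_borel)
lemma emeasure_mu_compact: "compact C \<Longrightarrow> emeasure mu C < \<infinity>"
  using haar[unfolded left_haar_measure_def, THEN conjunct2, THEN conjunct1] by blast
lemma emeasure_mu_open: "open U \<Longrightarrow> U \<noteq> {} \<Longrightarrow> emeasure mu U > 0"
  using haar[unfolded left_haar_measure_def, THEN conjunct2, THEN conjunct2, THEN conjunct1] by blast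
lemma emeasure_mu_left_invariant: "A \<in> sets mu \<Longrightarrow> emeasure mu (mul g ` A) = emeasure mu A"
  using haar[unfolded left_haar_measure_def, THEN conjunct2, THEN conjunct2, THEN conjunct2, THEN conjunct1]
  by blast

lemma dk_finite_on_compact: "finite_on_compact dk K"
  using dk_haar K_compact by (simp add: finite_on_compact_def normalized_haar_on_def)
lemma dk_sets: "sets dk = sets borel"
  using dk_haar by (simp add: normalized_haar_on_def)
lemma dk_space: "space dk = UNIV"
  by (metis dk_sets sets_eq_imp_space_eq space_borel)

lemma integral_mu_left_translate:
  fixes f :: "'g \<Rightarrow> 'b::{banach,second_countable_topology}"
  shows "f \<in> borel_measurable borel \<Longrightarrow> (\<integral>u. f (mul a u) \<partial>mu) = integral\<^sup>L mu f"
  by (rule integral_left_translate[OF mu_sets emeasure_mu_left_invariant])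

lemma integral_dk_left_translate:
  fixes f :: "'g \<Rightarrow> 'b::{banach,second_countable_topology}"
  shows "f \<in> borel_measurable borel \<Longrightarrow> k \<in> K \<Longrightarrow> (\<integral>u. f (mul k u) \<partial>dk) = integral\<^sup>L dk f"
  using dk_haar unfolding normalized_haar_on_def by (intro integral_left_translate) auto

lemma integrable_dk:
  "continuous_on UNIV f \<Longrightarrow> integrable dk (f :: 'g \<Rightarrow> 'b::{banach,second_countable_topology})"
  by (rule finite_on_compact_integrable[OF dk_finite_on_compact])

lemma measure_dk_space [simp]: "measure dk (space dk) = 1"
  using dk_haar by (simp add: dk_space normalized_haar_on_def measure_def)

lemma integral_dk_cong:
  assumes f: "continuous_on UNIV f" and g: "continuous_on UNIV g" and eq: "\<And>m. m \<in> K \<Longrightarrow> f m = g m"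
  shows "integral\<^sup>L dk f = integral\<^sup>L dk g"
proof (rule integral_cong_AE)
  show "AE m in dk. f m = g m"
    using AE_finite_on_compact[OF dk_finite_on_compact] by eventually_elim (rule eq)
qed (use finite_on_compact_measurable[OF dk_finite_on_compact] f g in auto)

lemma norm_integral_dk_le:
  fixes f :: "'g \<Rightarrow> 'b::{banach,second_countable_topology}"
  assumes "integrable dk f" "\<And>m. m \<in> K \<Longrightarrow> norm (f m) \<le> B"
  shows "norm (integral\<^sup>L dk f) \<le> B"
  using finite_on_compact_norm_integral_bound[OF dk_finite_on_compact assms] by (simp add: dk_space[symmetric])

text \<open>Integrals against \<open>mu\<close> of functions vanishing off a compact set \<open>C\<close> are integrals against
  the finite measure \<open>mu_on C\<close>, to which the results on finite measures apply.\<close>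
definition mu_on :: "'g set \<Rightarrow> 'g measure" where
  "mu_on C = density mu (\<lambda>x. ennreal (indicator C x))"

lemma mu_on_finite_on_compact:
  assumes C: "compact C"
  shows "finite_on_compact (mu_on C) C"
proof -
  have Cb [measurable]: "C \<in> sets borel" by (simp add: C compact_imp_closed)
  have em: "emeasure (mu_on C) A = emeasure mu (C \<inter> A)" if A: "A \<in> sets borel" for A
  proof -
    have "emeasure (mu_on C) A = (\<integral>\<^sup>+ x. ennreal (indicator C x) * indicator A x \<partial>mu)"
      unfolding mu_on_def using A by (intro emeasure_density) (auto simp: mu_sets measurable_cong_sets[OF mu_sets refl])
    also have "\<dots> = (\<integral>\<^sup>+ x. indicator (C \<inter> A) x \<partial>mu)"
      by (intro nn_integral_cong) (simp split: split_indicator)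
    also have "\<dots> = emeasure mu (C \<inter> A)"
      using A by (intro nn_integral_indicator) (simp add: mu_sets)
    finally show ?thesis .
  qed
  show ?thesis
    unfolding finite_on_compact_def
    using em[of UNIV] em[of "UNIV - C"] emeasure_mu_compact[OF C] C compact_imp_closed
    by (auto simp: mu_on_def mu_sets)
qed

lemma integral_mu_on:
  fixes f :: "'g \<Rightarrow> 'b::{banach,second_countable_topology}"
  assumes C: "compact C" and f: "continuous_on UNIV f" and z: "\<And>x. x \<notin> C \<Longrightarrow> f x = 0"
  shows "integral\<^sup>L mu f = integral\<^sup>L (mu_on C) f"
    and "integrable mu f"
proof -
  have Cb: "C \<in> sets borel" by (simp add: C compact_imp_closed)
  have fm: "f \<in> borel_measurable mu"
    by (simp add: measurable_cong_sets[OF mu_sets refl] borel_measurable_continuous_onI[OF f])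
  have ind: "(\<lambda>x. indicator C x *\<^sub>R f x) = f" by (auto simp: indicator_def z)
  have "integral\<^sup>L (mu_on C) f = (\<integral>x. indicator C x *\<^sub>R f x \<partial>mu)"
    unfolding mu_on_def
    by (rule integral_density) (use fm Cb in \<open>auto simp: measurable_cong_sets[OF mu_sets refl]\<close>)
  then show "integral\<^sup>L mu f = integral\<^sup>L (mu_on C) f" by (simp add: ind)
  have "integrable (mu_on C) f"
    by (rule finite_on_compact_integrable[OF mu_on_finite_on_compact[OF C] f])
  then have "integrable mu (\<lambda>x. indicator C x *\<^sub>R f x)"
    unfolding mu_on_def
    by (subst (asm) integrable_density) (use fm Cb in \<open>auto simp: measurable_cong_sets[OF mu_sets refl]\<close>)
  then show "integrable mu f" by (simp add: ind)
qed

lemma continuous_on_parametric_integral_mu: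
  fixes F :: "'p::t2_space \<times> 'g \<Rightarrow> 'b::{banach,second_countable_topology}"
  assumes C: "compact C" and F: "continuous_on UNIV F" and z: "\<And>p b. b \<notin> C \<Longrightarrow> F (p, b) = 0"
  shows "continuous_on UNIV (\<lambda>p. \<integral>b. F (p, b) \<partial>mu)"
proof -
  have Fp: "continuous_on UNIV (\<lambda>b. F (p, b))" for p
    by (rule continuous_on_compose2[OF F]) (auto intro!: continuous_intros)
  have eq: "(\<lambda>p. \<integral>b. F (p, b) \<partial>mu) = (\<lambda>p. \<integral>b. F (p, b) \<partial>mu_on C)"
    using integral_mu_on(1)[OF C Fp] z by auto
  show ?thesis
    unfolding eq by (rule continuous_on_parametric_integral[OF mu_on_finite_on_compact[OF C] F])
qed

lemma conjugation_stable_nhd: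
  assumes V: "open V" "e \<in> V"
  obtains V0 where "open V0" "e \<in> V0" "\<And>n w. n \<in> K \<Longrightarrow> w \<in> V0 \<Longrightarrow> mul n (mul w (iv n)) \<in> V"
proof -
  define W where "W = (\<lambda>q::'g \<times> 'g. mul (snd q) (mul (fst q) (iv (snd q)))) -` V"
  have "open W" unfolding W_def by (intro open_vimage V) (intro group_continuous_intros)
  moreover have "{e} \<times> K \<subseteq> W" using V by (auto simp: W_def)
  ultimately obtain V0 where "e \<in> V0" "open V0" "V0 \<times> K \<subseteq> W"
    using Elementary_Topology.tube_lemma[OF K_compact] by metis
  then show ?thesis by (intro that[of V0]) (auto simp: W_def)
qed

lemma integral_dk_conj_invariant:
  fixes \<sigma> :: "'g \<Rightarrow> 'b::{banach,second_countable_topology}"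
  assumes \<sigma>: "continuous_on UNIV \<sigma>" and k: "k \<in> K"
  shows "(\<integral>n. \<sigma> (mul (iv n) (mul (mul k (mul a (iv k))) n)) \<partial>dk) = (\<integral>n. \<sigma> (mul (iv n) (mul a n)) \<partial>dk)"
proof -
  define h where "h n = \<sigma> (mul (iv n) (mul a n))" for n
  have "h \<in> borel_measurable borel"
    unfolding h_def by (intro borel_measurable_continuous_onI continuous_on_compose2[OF \<sigma>]
        group_continuous_intros) auto
  then have "(\<integral>n. h (mul (iv k) n) \<partial>dk) = (\<integral>n. h n \<partial>dk)"
    using k by (intro integral_dk_left_translate) auto
  then show ?thesis
    unfolding h_def by (simp add: iv_mul assoc)
qed

lemma exists_invariant_bump:
  assumes V: "open V" "e \<in> V"
  obtains \<rho> :: "'g \<Rightarrow> real" and C where "continuous_on UNIV \<rho>" "\<And>x. 0 \<le> \<rho> x" "\<rho> e = 1"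
    "\<And>x. x \<notin> V \<Longrightarrow> \<rho> x = 0" "compact C" "\<And>x. x \<notin> C \<Longrightarrow> \<rho> x = 0"
    "\<And>k a. k \<in> K \<Longrightarrow> \<rho> (mul k (mul a (iv k))) = \<rho> a"
proof -
  obtain V0 where V0: "open V0" "e \<in> V0" "\<And>n w. n \<in> K \<Longrightarrow> w \<in> V0 \<Longrightarrow> mul n (mul w (iv n)) \<in> V"
    using conjugation_stable_nhd[OF V] by blast
  obtain \<sigma> :: "'g \<Rightarrow> real" and C where s: "continuous_on UNIV \<sigma>" "\<And>x. 0 \<le> \<sigma> x" "\<sigma> e = 1"
    "\<And>x. x \<notin> V0 \<Longrightarrow> \<sigma> x = 0" "compact C" "\<And>x. x \<notin> C \<Longrightarrow> \<sigma> x = 0"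
    using exists_bump[OF V0(1,2)] by blast
  define \<rho> where "\<rho> u = (\<integral>n. \<sigma> (mul (iv n) (mul u n)) \<partial>dk)" for u
  have Fc: "continuous_on UNIV (\<lambda>q::'g \<times> 'g. \<sigma> (mul (iv (snd q)) (mul (fst q) (snd q))))"
    by (rule continuous_on_compose2[OF s(1)]) (auto intro!: group_continuous_intros)
  have Fu: "continuous_on UNIV (\<lambda>n. \<sigma> (mul (iv n) (mul u n)))" for u
    by (rule continuous_on_compose2[OF s(1)]) (auto intro!: group_continuous_intros)
  have zero: "\<rho> u = 0" if "\<And>n. n \<in> K \<Longrightarrow> \<sigma> (mul (iv n) (mul u n)) = 0" for u
    using integral_dk_cong[OF Fu continuous_on_const, of u 0] that by (simp add: \<rho>_def)
  have conj_back: "u = mul n (mul (mul (iv n) (mul u n)) (iv n))" for u n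
    by (simp add: assoc)
  define C' where "C' = (\<lambda>q::'g \<times> 'g. mul (fst q) (mul (snd q) (iv (fst q)))) ` (K \<times> C)"
  show ?thesis
  proof (rule that[of \<rho> C'])
    show "continuous_on UNIV \<rho>"
      unfolding \<rho>_def using continuous_on_parametric_integral[OF dk_finite_on_compact Fc] by simp
    show "0 \<le> \<rho> x" for x unfolding \<rho>_def by (rule Bochner_Integration.integral_nonneg) (rule s(2))
    show "\<rho> e = 1" unfolding \<rho>_def by (simp add: s(3))
    show "\<rho> x = 0" if "x \<notin> V" for x
    proof (rule zero)
      fix n assume n: "n \<in> K"
      have "mul (iv n) (mul x n) \<notin> V0" using V0(3)[OF n] conj_back[of x n] that by metis
      then show "\<sigma> (mul (iv n) (mul x n)) = 0" by (rule s(4))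
    qed
    show "compact C'" unfolding C'_def
      by (intro compact_continuous_image compact_Times K_compact s(5)) (auto intro!: group_continuous_intros)
    show "\<rho> x = 0" if "x \<notin> C'" for x
    proof (rule zero)
      fix n assume n: "n \<in> K"
      have "mul (iv n) (mul x n) \<notin> C"
      proof
        assume "mul (iv n) (mul x n) \<in> C"
        then have "x \<in> C'" unfolding C'_def using n conj_back[of x n]
          by (intro image_eqI[of _ _ "(n, mul (iv n) (mul x n))"]) auto
        with that show False by simp
      qed
      then show "\<sigma> (mul (iv n) (mul x n)) = 0" by (rule s(6))
    qed
    show "\<rho> (mul k (mul a (iv k))) = \<rho> a" if "k \<in> K" for k a
      unfolding \<rho>_def by (rule integral_dk_conj_invariant[OF s(1) that])
  qed
qed

lemma integral_bump_pos:
  assumes c: "continuous_on UNIV \<rho>" and nn: "\<And>x. 0 \<le> \<rho> x" and \<rho>e: "\<rho> e = (1::real)"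
    and C: "compact C" and z: "\<And>x. x \<notin> C \<Longrightarrow> \<rho> x = 0"
  shows "0 < (\<integral>x. \<rho> x \<partial>mu)"
proof -
  define U where "U = \<rho> -` {1/2<..}"
  have "open U" unfolding U_def by (rule open_vimage) (auto intro: c)
  moreover have "e \<in> U" using \<rho>e by (simp add: U_def)
  ultimately have pos: "emeasure mu U > 0" using emeasure_mu_open by blast
  have OC: "U \<subseteq> C" using z by (force simp: U_def)
  have Us: "U \<in> sets mu" using \<open>open U\<close> by (simp add: mu_sets)
  have fin: "emeasure mu U < \<infinity>"
    using emeasure_mono[OF OC, of mu] emeasure_mu_compact[OF C] by (simp add: mu_sets C compact_imp_closed)
  have "0 < measure mu U / 2" using pos fin by (simp add: measure_def enn2real_positive_iff)
  also have "\<dots> = (\<integral>x. indicator U x / 2 \<partial>mu)" by (simp add: mu_space)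
  also have "\<dots> \<le> (\<integral>x. \<rho> x \<partial>mu)"
  proof (rule integral_mono)
    show "integrable mu (\<lambda>x. indicator U x / 2 :: real)"
      using integrable_real_indicator[OF Us fin] by simp
    show "integrable mu \<rho>" by (rule integral_mu_on(2)[OF C c z])
    show "indicator U x / 2 \<le> \<rho> x" for x using nn[of x] by (auto simp: indicator_def U_def)
  qed
  finally show ?thesis .
qed

lemma Fubini_mu:
  fixes F :: "'g \<times> 'g \<Rightarrow> complex"
  assumes A: "compact A" and B: "compact B" and F: "continuous_on UNIV F"
    and z: "\<And>a b. a \<notin> A \<or> b \<notin> B \<Longrightarrow> F (a, b) = 0"
  shows "(\<integral>a. \<integral>b. F (a, b) \<partial>mu \<partial>mu) = (\<integral>b. \<integral>a. F (a, b) \<partial>mu \<partial>mu)"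
proof -
  have F1: "continuous_on UNIV (\<lambda>b. F (a, b))" for a
    by (rule continuous_on_compose2[OF F]) (auto intro!: continuous_intros)
  have F2: "continuous_on UNIV (\<lambda>a. F (a, b))" for b
    by (rule continuous_on_compose2[OF F]) (auto intro!: continuous_intros)
  have Fswap: "continuous_on UNIV (\<lambda>q. F (snd q, fst q))"
    by (rule continuous_on_compose2[OF F]) (auto intro!: continuous_intros)
  have i1: "(\<integral>b. F (a, b) \<partial>mu) = (\<integral>b. F (a, b) \<partial>mu_on B)" for a
    by (rule integral_mu_on(1)[OF B F1]) (use z in auto)
  have i2: "(\<integral>a. F (a, b) \<partial>mu) = (\<integral>a. F (a, b) \<partial>mu_on A)" for b
    by (rule integral_mu_on(1)[OF A F2]) (use z in auto)
  have c1: "continuous_on UNIV (\<lambda>a. \<integral>b. F (a, b) \<partial>mu_on B)"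
    by (rule continuous_on_parametric_integral[OF mu_on_finite_on_compact[OF B] F])
  have c2: "continuous_on UNIV (\<lambda>b. \<integral>a. F (a, b) \<partial>mu_on A)"
    using continuous_on_parametric_integral[OF mu_on_finite_on_compact[OF A] Fswap] by simp
  have "(\<integral>a. \<integral>b. F (a, b) \<partial>mu \<partial>mu) = (\<integral>a. \<integral>b. F (a, b) \<partial>mu_on B \<partial>mu)"
    by (simp add: i1)
  also have "\<dots> = (\<integral>a. \<integral>b. F (a, b) \<partial>mu_on B \<partial>mu_on A)"
    by (rule integral_mu_on(1)[OF A c1]) (use z in auto)
  also have "\<dots> = (\<integral>b. \<integral>a. F (a, b) \<partial>mu_on A \<partial>mu_on B)"
    by (rule Fubini_continuous[OF completely_regular_euclidean completely_regular_euclidean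
          mu_on_finite_on_compact[OF A] mu_on_finite_on_compact[OF B] F])
  also have "\<dots> = (\<integral>b. \<integral>a. F (a, b) \<partial>mu_on A \<partial>mu)"
    by (rule integral_mu_on(1)[OF B c2, symmetric]) (use z in auto)
  also have "\<dots> = (\<integral>b. \<integral>a. F (a, b) \<partial>mu \<partial>mu)"
    by (simp add: i2)
  finally show ?thesis .
qed

lemma Fubini_mu_dk:
  fixes F :: "'g \<times> 'g \<Rightarrow> complex"
  assumes A: "compact A" and F: "continuous_on UNIV F"
    and z: "\<And>u m. m \<in> K \<Longrightarrow> u \<notin> A \<Longrightarrow> F (u, m) = 0"
  shows "(\<integral>u. \<integral>m. F (u, m) \<partial>dk \<partial>mu) = (\<integral>m. \<integral>u. F (u, m) \<partial>mu_on A \<partial>dk)"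
proof -
  have F1: "continuous_on UNIV (\<lambda>m. F (u, m))" for u
    by (rule continuous_on_compose2[OF F]) (auto intro!: continuous_intros)
  have c1: "continuous_on UNIV (\<lambda>u. \<integral>m. F (u, m) \<partial>dk)"
    by (rule continuous_on_parametric_integral[OF dk_finite_on_compact F])
  have "(\<integral>u. \<integral>m. F (u, m) \<partial>dk \<partial>mu) = (\<integral>u. \<integral>m. F (u, m) \<partial>dk \<partial>mu_on A)"
  proof (rule integral_mu_on(1)[OF A c1])
    fix u assume "u \<notin> A"
    then show "(\<integral>m. F (u, m) \<partial>dk) = 0"
      using integral_dk_cong[OF F1 continuous_on_const, of u 0] z by simp
  qed
  also have "\<dots> = (\<integral>m. \<integral>u. F (u, m) \<partial>mu_on A \<partial>dk)"
    by (rule Fubini_continuous[OF completely_regular_euclidean completely_regular_euclidean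
          mu_on_finite_on_compact[OF A] dk_finite_on_compact F])
  finally show ?thesis .
qed

definition orbit_integral :: "('g \<Rightarrow> complex) \<Rightarrow> 'g \<Rightarrow> 'g \<Rightarrow> complex" where
  "orbit_integral \<omega> x y = (\<integral>k. \<omega> (mul (mul x k) (mul y (iv k))) \<partial>dk)"

definition orbit_average :: "('g \<Rightarrow> complex) \<Rightarrow> 'g \<Rightarrow> 'g \<Rightarrow> complex" where
  "orbit_average \<omega> y u = (\<integral>n. \<omega> (mul u (mul n (mul y (iv n)))) \<partial>dk)"

lemma continuous_on_orbit_average:
  assumes w: "continuous_on UNIV \<omega>"
  shows "continuous_on UNIV (orbit_average \<omega> y)"
proof -
  have "continuous_on UNIV (\<lambda>q. \<omega> (mul (fst q) (mul (snd q) (mul y (iv (snd q))))))"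
    by (intro continuous_on_compose2[OF w] group_continuous_intros) auto
  from continuous_on_parametric_integral[OF dk_finite_on_compact this] show ?thesis
    unfolding orbit_average_def[abs_def] by simp
qed

lemma orbit_average_conj:
  assumes kc: "K_central mul K \<omega>" and w: "continuous_on UNIV \<omega>" and m: "m \<in> K"
  shows "orbit_average \<omega> y (mul m (mul x (iv m))) = orbit_integral \<omega> x y"
proof -
  define h where "h n = \<omega> (mul x (mul (mul (iv m) n) (mul y (mul (iv n) m))))" for n
  have hc: "continuous_on UNIV h"
    unfolding h_def by (intro continuous_on_compose2[OF w] group_continuous_intros) auto
  have "orbit_average \<omega> y (mul m (mul x (iv m))) = (\<integral>n. h n \<partial>dk)"
    unfolding orbit_average_def
  proof (rule Bochner_Integration.integral_cong[OF refl])
    fix n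
    have "\<omega> (mul (mul m (mul x (iv m))) (mul n (mul y (iv n)))) =
      \<omega> (mul (iv m) (mul (mul (mul m (mul x (iv m))) (mul n (mul y (iv n)))) (iv (iv m))))"
      by (rule K_central_conj[OF kc, symmetric]) (simp add: m)
    then show "\<omega> (mul (mul m (mul x (iv m))) (mul n (mul y (iv n)))) = h n"
      by (simp add: h_def assoc)
  qed
  also have "\<dots> = (\<integral>k. h (mul m k) \<partial>dk)"
    by (rule integral_dk_left_translate[symmetric]) (use borel_measurable_continuous_onI[OF hc] m in auto)
  also have "\<dots> = orbit_integral \<omega> x y"
    unfolding orbit_integral_def h_def by (simp add: assoc iv_mul)
  finally show ?thesis .
qed

end

locale invariant_bump = haar_setting mul e iv mu dk K
  for mul :: "'g::t2_space \<Rightarrow> 'g \<Rightarrow> 'g" and e iv mu dk K +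
  fixes \<rho> :: "'g \<Rightarrow> real" and C :: "'g set"
  assumes bump_continuous: "continuous_on UNIV \<rho>" and bump_nonneg: "\<And>x. 0 \<le> \<rho> x"
    and bump_unit: "\<rho> e = 1" and bump_support: "compact C" "\<And>x. x \<notin> C \<Longrightarrow> \<rho> x = 0"
    and bump_conj: "\<And>k a. k \<in> K \<Longrightarrow> \<rho> (mul k (mul a (iv k))) = \<rho> a"
begin

text \<open>\<open>kernel x\<close> is the function \<open>g\<^sub>x\<close> of the proof idea: the \<open>K\<close>-average of the left
  translates of \<open>\<rho>\<close> by the conjugates \<open>m x m\<^sup>-\<^sup>1\<close>.\<close>
definition kernel_re :: "'g \<Rightarrow> 'g \<Rightarrow> real" where
  "kernel_re x u = (\<integral>m. \<rho> (mul m (mul (iv x) (mul (iv m) u))) \<partial>dk)"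

definition kernel :: "'g \<Rightarrow> 'g \<Rightarrow> complex" where
  "kernel x u = complex_of_real (kernel_re x u)"

definition kernel_support :: "'g \<Rightarrow> 'g set" where
  "kernel_support x = (\<lambda>q. mul (fst q) (mul x (mul (iv (fst q)) (snd q)))) ` (K \<times> C)"

definition bump_mass :: real where
  "bump_mass = (\<integral>w. \<rho> w \<partial>mu)"

lemma bump_mass_pos: "bump_mass > 0"
  unfolding bump_mass_def using integral_bump_pos bump_continuous bump_nonneg bump_unit bump_support
  by blast

lemma integrable_bump: "integrable mu \<rho>"
  by (rule integral_mu_on(2)[OF bump_support(1) bump_continuous bump_support(2)])

lemma compact_kernel_support: "compact (kernel_support x)"
  unfolding kernel_support_def
  by (intro compact_continuous_image compact_Times K_compact bump_support) (auto intro!: group_continuous_intros)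

lemma bump_vanishes_off_kernel_support:
  assumes m: "m \<in> K" and u: "u \<notin> kernel_support x"
  shows "\<rho> (mul m (mul (iv x) (mul (iv m) u))) = 0"
proof (rule bump_support(2), rule notI)
  assume c: "mul m (mul (iv x) (mul (iv m) u)) \<in> C"
  have "u = mul m (mul x (mul (iv m) (mul m (mul (iv x) (mul (iv m) u)))))"
    by (simp add: assoc)
  then have "u \<in> kernel_support x"
    unfolding kernel_support_def using m c
    by (intro image_eqI[of _ _ "(m, mul m (mul (iv x) (mul (iv m) u)))"]) auto
  with u show False by simp
qed

lemma continuous_on_bump_conj_translate:
  "continuous_on UNIV (\<lambda>q::'g \<times> 'g. \<rho> (mul (snd q) (mul (iv x) (mul (iv (snd q)) (fst q)))))"
  "continuous_on UNIV (\<lambda>m. \<rho> (mul m (mul (iv x) (mul (iv m) u))))"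
  by (rule continuous_on_compose2[OF bump_continuous]; auto intro!: group_continuous_intros)+

lemma continuous_on_kernel_re: "continuous_on UNIV (kernel_re x)"
  unfolding kernel_re_def[abs_def]
  using continuous_on_parametric_integral[OF dk_finite_on_compact continuous_on_bump_conj_translate(1)]
  by simp

lemma continuous_on_kernel: "continuous_on UNIV (kernel x)"
  unfolding kernel_def[abs_def] by (intro continuous_intros continuous_on_kernel_re)

lemma kernel_re_vanishes: "u \<notin> kernel_support x \<Longrightarrow> kernel_re x u = 0"
  using integral_dk_cong[OF continuous_on_bump_conj_translate(2) continuous_on_const, of x u 0]
    bump_vanishes_off_kernel_support
  by (simp add: kernel_re_def)

lemma kernel_vanishes: "u \<notin> kernel_support x \<Longrightarrow> kernel x u = 0"
  by (simp add: kernel_def kernel_re_vanishes)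

lemma kernel_re_nonneg: "0 \<le> kernel_re x u"
  unfolding kernel_re_def by (rule Bochner_Integration.integral_nonneg) (rule bump_nonneg)

lemma kernel_re_K_central:
  assumes k: "k \<in> K"
  shows "kernel_re x (mul k u) = kernel_re x (mul u k)"
proof -
  define h where "h m = \<rho> (mul m (mul (iv x) (mul (iv m) (mul k u))))" for m
  have "kernel_re x (mul k u) = (\<integral>m. h (mul k m) \<partial>dk)"
    unfolding kernel_re_def h_def[symmetric]
    by (rule integral_dk_left_translate[symmetric])
      (simp_all add: k h_def borel_measurable_continuous_onI[OF continuous_on_bump_conj_translate(2)])
  also have "\<dots> = (\<integral>m. \<rho> (mul k (mul (mul m (mul (iv x) (mul (iv m) (mul u k)))) (iv k))) \<partial>dk)"
    unfolding h_def by (simp add: iv_mul assoc)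
  also have "\<dots> = kernel_re x (mul u k)"
    unfolding kernel_re_def by (simp add: bump_conj k)
  finally show ?thesis .
qed

lemma kernel_in_KK_space: "kernel x \<in> KK_space mul K"
  unfolding KK_space_def K_central_def
proof (intro CollectI conjI ballI allI)
  show "continuous_on UNIV (kernel x)" by (rule continuous_on_kernel)
  show "\<exists>C. compact C \<and> (\<forall>u. u \<notin> C \<longrightarrow> kernel x u = 0)"
    using compact_kernel_support kernel_vanishes by blast
  show "kernel x (mul k u) = kernel x (mul u k)" if "k \<in> K" for k u
    using kernel_re_K_central[OF that] by (simp add: kernel_def)
qed

lemma integral_kernel_mult:
  fixes H :: "'g \<Rightarrow> complex"
  assumes Hc: "continuous_on UNIV H"
  shows "(\<integral>u. kernel x u * H u \<partial>mu)
    = (\<integral>m. \<integral>w. complex_of_real (\<rho> w) * H (mul (mul m (mul x (iv m))) w) \<partial>mu \<partial>dk)"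
proof -
  define a where "a m = mul m (mul x (iv m))" for m
  define F where "F q = complex_of_real (\<rho> (mul (snd q) (mul (iv x) (mul (iv (snd q)) (fst q))))) * H (fst q)"
    for q
  define J where "J m = (\<integral>w. complex_of_real (\<rho> w) * H (mul (a m) w) \<partial>mu)" for m
  have Fc: "continuous_on UNIV F"
    unfolding F_def by (intro continuous_intros continuous_on_compose2[OF continuous_on_bump_conj_translate(1)]
        continuous_on_compose2[OF Hc]) auto
  have Fu: "continuous_on UNIV (\<lambda>u. F (u, m))" for m
    by (rule continuous_on_compose2[OF Fc]) (auto intro!: continuous_intros)
  have Fswap: "continuous_on UNIV (\<lambda>q. F (snd q, fst q))"
    by (rule continuous_on_compose2[OF Fc]) (auto intro!: continuous_intros)
  have Jc: "continuous_on UNIV J"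
  proof -
    have "continuous_on UNIV (\<lambda>q. complex_of_real (\<rho> (snd q)) * H (mul (a (fst q)) (snd q)))"
      unfolding a_def by (intro continuous_intros continuous_on_compose2[OF bump_continuous]
          continuous_on_compose2[OF Hc] group_continuous_intros) auto
    from continuous_on_parametric_integral_mu[OF bump_support(1) this] show ?thesis
      unfolding J_def[abs_def] by (simp add: bump_support(2))
  qed
  have "(\<integral>u. kernel x u * H u \<partial>mu) = (\<integral>u. \<integral>m. F (u, m) \<partial>dk \<partial>mu)"
  proof (rule Bochner_Integration.integral_cong[OF refl])
    fix u
    have "integrable dk (\<lambda>m. complex_of_real (\<rho> (mul m (mul (iv x) (mul (iv m) u)))))"
      by (intro integrable_dk continuous_intros continuous_on_bump_conj_translate(2))
    then show "kernel x u * H u = (\<integral>m. F (u, m) \<partial>dk)"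
      by (simp add: kernel_def kernel_re_def F_def)
  qed
  also have "\<dots> = (\<integral>m. \<integral>u. F (u, m) \<partial>mu_on (kernel_support x) \<partial>dk)"
    by (rule Fubini_mu_dk[OF compact_kernel_support Fc]) (simp add: F_def bump_vanishes_off_kernel_support)
  also have "\<dots> = (\<integral>m. J m \<partial>dk)"
  proof (rule integral_dk_cong[OF _ Jc])
    show "continuous_on UNIV (\<lambda>m. \<integral>u. F (u, m) \<partial>mu_on (kernel_support x))"
      using continuous_on_parametric_integral[OF mu_on_finite_on_compact[OF compact_kernel_support] Fswap]
      by simp
    fix m assume m: "m \<in> K"
    have "(\<integral>u. F (u, m) \<partial>mu_on (kernel_support x)) = (\<integral>u. F (u, m) \<partial>mu)"
      by (rule integral_mu_on(1)[OF compact_kernel_support Fu, symmetric])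
        (simp add: F_def bump_vanishes_off_kernel_support m)
    also have "\<dots> = (\<integral>w. F (mul (a m) w, m) \<partial>mu)"
      by (rule integral_mu_left_translate[symmetric]) (rule borel_measurable_continuous_onI[OF Fu])
    also have "\<dots> = J m" unfolding J_def F_def a_def by (simp add: assoc)
    finally show "(\<integral>u. F (u, m) \<partial>mu_on (kernel_support x)) = J m" .
  qed
  finally show ?thesis unfolding J_def a_def .
qed

lemma bump_average_close:
  fixes G :: "'g \<Rightarrow> complex"
  assumes G: "continuous_on UNIV G" and close: "\<And>w. \<rho> w \<noteq> 0 \<Longrightarrow> norm (G w - c) \<le> \<epsilon>"
  shows "norm ((\<integral>w. complex_of_real (\<rho> w) * G w \<partial>mu) - complex_of_real bump_mass * c) \<le> bump_mass * \<epsilon>"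
proof -
  have int: "integrable mu (\<lambda>w. complex_of_real (\<rho> w) * G' w)" if "continuous_on UNIV G'" for G'
    by (rule integral_mu_on(2)[OF bump_support(1)])
      (auto intro!: continuous_intros that bump_continuous simp: bump_support(2))
  have "(\<integral>w. complex_of_real (\<rho> w) * G w \<partial>mu) - complex_of_real bump_mass * c
      = (\<integral>w. complex_of_real (\<rho> w) * (G w - c) \<partial>mu)"
    using int[OF G] int[OF continuous_on_const, of c] integrable_bump
    by (simp add: bump_mass_def algebra_simps)
  also have "norm \<dots> \<le> (\<integral>w. norm (complex_of_real (\<rho> w) * (G w - c)) \<partial>mu)"
    by (rule integral_norm_bound)
  also have "\<dots> \<le> (\<integral>w. \<rho> w * \<epsilon> \<partial>mu)"
  proof (rule integral_mono)
    show "integrable mu (\<lambda>w. norm (complex_of_real (\<rho> w) * (G w - c)))"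
      by (intro integrable_norm int continuous_intros G)
    show "integrable mu (\<lambda>w. \<rho> w * \<epsilon>)" using integrable_bump by simp
    show "norm (complex_of_real (\<rho> w) * (G w - c)) \<le> \<rho> w * \<epsilon>" for w
      using close[of w] bump_nonneg[of w]
      by (cases "\<rho> w = 0") (auto simp: norm_mult intro: mult_left_mono)
  qed
  also have "\<dots> = bump_mass * \<epsilon>" by (simp add: bump_mass_def)
  finally show ?thesis .
qed

lemma kernel_integral_estimate:
  fixes H :: "'g \<Rightarrow> complex"
  assumes Hc: "continuous_on UNIV H"
    and H_var: "\<And>m w. m \<in> K \<Longrightarrow> \<rho> w \<noteq> 0 \<Longrightarrow>
      norm (H (mul (mul m (mul x (iv m))) w) - H (mul m (mul x (iv m)))) \<le> \<epsilon>"
  shows "norm ((\<integral>u. kernel x u * H u \<partial>mu)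
      - complex_of_real bump_mass * (\<integral>m. H (mul m (mul x (iv m))) \<partial>dk)) \<le> bump_mass * \<epsilon>"
proof -
  define a where "a m = mul m (mul x (iv m))" for m
  define J where "J m = (\<integral>w. complex_of_real (\<rho> w) * H (mul (a m) w) \<partial>mu)" for m
  have Hac: "continuous_on UNIV (\<lambda>m. H (a m))"
    unfolding a_def by (intro continuous_on_compose2[OF Hc] group_continuous_intros) auto
  have Jc: "continuous_on UNIV J"
  proof -
    have "continuous_on UNIV (\<lambda>q. complex_of_real (\<rho> (snd q)) * H (mul (a (fst q)) (snd q)))"
      unfolding a_def by (intro continuous_intros continuous_on_compose2[OF bump_continuous]
          continuous_on_compose2[OF Hc] group_continuous_intros) auto
    from continuous_on_parametric_integral_mu[OF bump_support(1) this] show ?thesis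
      unfolding J_def[abs_def] by (simp add: bump_support(2))
  qed
  have close: "norm (J m - complex_of_real bump_mass * H (a m)) \<le> bump_mass * \<epsilon>" if m: "m \<in> K" for m
    unfolding J_def using H_var[OF m]
    by (intro bump_average_close) (auto simp: a_def intro!: continuous_on_compose2[OF Hc] group_continuous_intros)
  have "(\<integral>u. kernel x u * H u \<partial>mu) = (\<integral>m. J m \<partial>dk)"
    using integral_kernel_mult[OF Hc, of x] by (simp add: J_def a_def)
  then have "(\<integral>u. kernel x u * H u \<partial>mu) - complex_of_real bump_mass * (\<integral>m. H (a m) \<partial>dk)
      = (\<integral>m. J m - complex_of_real bump_mass * H (a m) \<partial>dk)"
    using integrable_dk[OF Jc] integrable_dk[OF Hac] by simp
  also have "norm \<dots> \<le> bump_mass * \<epsilon>"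
    by (intro norm_integral_dk_le close integrable_dk continuous_intros Jc Hac)
  finally show ?thesis unfolding a_def .
qed

definition smoothed :: "('g \<Rightarrow> complex) \<Rightarrow> 'g \<Rightarrow> 'g \<Rightarrow> complex" where
  "smoothed \<omega> y u = (\<integral>v. kernel y v * \<omega> (mul u v) \<partial>mu)"

lemma continuous_on_smoothed:
  assumes w: "continuous_on UNIV \<omega>"
  shows "continuous_on UNIV (smoothed \<omega> y)"
proof -
  have "continuous_on UNIV (\<lambda>q. kernel y (snd q) * \<omega> (mul (fst q) (snd q)))"
    by (intro continuous_intros continuous_on_compose2[OF continuous_on_kernel]
        continuous_on_compose2[OF w] group_continuous_intros) auto
  from continuous_on_parametric_integral_mu[OF compact_kernel_support[of y] this] show ?thesis
    unfolding smoothed_def[abs_def] by (simp add: kernel_vanishes)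
qed

lemma integral_kernel_re: "(\<integral>u. kernel_re x u \<partial>mu) = bump_mass"
proof -
  have "norm ((\<integral>u. kernel x u * 1 \<partial>mu) - complex_of_real bump_mass * (\<integral>m. 1 \<partial>dk)) \<le> bump_mass * 0"
    by (rule kernel_integral_estimate) auto
  then show ?thesis by (simp add: kernel_def)
qed

lemma integral_mult_convolution:
  assumes w: "continuous_on UNIV \<omega>"
  shows "(\<integral>z. \<omega> z * convolution mul iv mu (kernel x) (kernel y) z \<partial>mu)
    = (\<integral>u. kernel x u * smoothed \<omega> y u \<partial>mu)"
proof -
  define P where "P = (\<lambda>q. mul (fst q) (snd q)) ` (kernel_support x \<times> kernel_support y)"
  have Pc: "compact P" unfolding P_def
    by (intro compact_continuous_image compact_Times compact_kernel_support)
      (auto intro!: group_continuous_intros)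
  define F where "F q = \<omega> (fst q) * (kernel x (snd q) * kernel y (mul (iv (snd q)) (fst q)))" for q
  have Fc: "continuous_on UNIV F" unfolding F_def
    by (intro continuous_intros continuous_on_compose2[OF continuous_on_kernel]
        continuous_on_compose2[OF w] group_continuous_intros) auto
  have Fz: "F (z, u) = 0" if "z \<notin> P \<or> u \<notin> kernel_support x" for z u
  proof (cases "u \<in> kernel_support x \<and> mul (iv u) z \<in> kernel_support y")
    case True
    then have "z \<in> P" unfolding P_def by (intro image_eqI[of _ _ "(u, mul (iv u) z)"]) auto
    with that True show ?thesis by auto
  next
    case False then show ?thesis by (auto simp: F_def kernel_vanishes)
  qed
  have "(\<integral>z. \<omega> z * convolution mul iv mu (kernel x) (kernel y) z \<partial>mu) = (\<integral>z. \<integral>u. F (z, u) \<partial>mu \<partial>mu)"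
    by (simp add: convolution_def F_def)
  also have "\<dots> = (\<integral>u. \<integral>z. F (z, u) \<partial>mu \<partial>mu)"
    by (rule Fubini_mu[OF Pc compact_kernel_support Fc]) (use Fz in auto)
  also have "\<dots> = (\<integral>u. kernel x u * smoothed \<omega> y u \<partial>mu)"
  proof (rule Bochner_Integration.integral_cong[OF refl])
    fix u
    have m: "(\<lambda>z. \<omega> z * kernel y (mul (iv u) z)) \<in> borel_measurable borel"
      by (intro borel_measurable_continuous_onI continuous_intros
          continuous_on_compose2[OF continuous_on_kernel] w group_continuous_intros) auto
    have "(\<lambda>z. F (z, u)) = (\<lambda>z. kernel x u * (\<omega> z * kernel y (mul (iv u) z)))"
      by (auto simp: F_def)
    then have "(\<integral>z. F (z, u) \<partial>mu) = kernel x u * (\<integral>z. \<omega> z * kernel y (mul (iv u) z) \<partial>mu)"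
      by simp
    also have "(\<integral>z. \<omega> z * kernel y (mul (iv u) z) \<partial>mu)
        = (\<integral>v. \<omega> (mul u v) * kernel y (mul (iv u) (mul u v)) \<partial>mu)"
      by (rule integral_mu_left_translate[OF m, symmetric])
    also have "\<dots> = smoothed \<omega> y u" by (simp add: smoothed_def mult.commute)
    finally show "(\<integral>z. F (z, u) \<partial>mu) = kernel x u * smoothed \<omega> y u" .
  qed
  finally show ?thesis .
qed

lemma integrable_kernel_mult:
  "continuous_on UNIV G \<Longrightarrow> integrable mu (\<lambda>u. kernel x u * G u)"
  by (rule integral_mu_on(2)[OF compact_kernel_support[of x]])
    (auto intro!: continuous_intros continuous_on_kernel simp: kernel_vanishes)

lemma norm_integral_kernel_mult_le:
  assumes G: "continuous_on UNIV G" and le: "\<And>u. u \<in> kernel_support x \<Longrightarrow> norm (G u) \<le> c"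
  shows "norm (\<integral>u. kernel x u * G u \<partial>mu) \<le> c * bump_mass"
proof -
  have "norm (\<integral>u. kernel x u * G u \<partial>mu) \<le> (\<integral>u. norm (kernel x u * G u) \<partial>mu)"
    by (rule integral_norm_bound)
  also have "\<dots> \<le> (\<integral>u. kernel_re x u * c \<partial>mu)"
  proof (rule integral_mono)
    show "integrable mu (\<lambda>u. norm (kernel x u * G u))"
      by (intro integrable_norm integrable_kernel_mult G)
    show "integrable mu (\<lambda>u. kernel_re x u * c)"
      by (rule integral_mu_on(2)[OF compact_kernel_support[of x]])
        (auto intro!: continuous_intros continuous_on_kernel_re simp: kernel_re_vanishes)
    show "norm (kernel x u * G u) \<le> kernel_re x u * c" for u
      using le[of u] kernel_re_nonneg[of x u]
      by (cases "u \<in> kernel_support x") (auto simp: kernel_def norm_mult kernel_re_vanishes intro: mult_left_mono)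
  qed
  also have "\<dots> = c * bump_mass"
    using integral_kernel_re[of x] by (simp add: mult.commute)
  finally show ?thesis .
qed

text \<open>Applying the approximate-identity estimate twice: once to \<open>smoothed \<omega> y\<close> (hypothesis
  \<open>UC1\<close>) and once to \<open>orbit_average \<omega> y\<close> (hypothesis \<open>UC2\<close>).\<close>
lemma pairing_approximates_orbit_integral:
  assumes w: "continuous_on UNIV \<omega>" and kc: "K_central mul K \<omega>" and \<epsilon>: "\<epsilon> \<ge> 0"
    and UC1: "\<And>u n w. u \<in> kernel_support x \<Longrightarrow> n \<in> K \<Longrightarrow> \<rho> w \<noteq> 0 \<Longrightarrow>
       norm (\<omega> (mul u (mul (mul n (mul y (iv n))) w)) - \<omega> (mul u (mul n (mul y (iv n))))) \<le> \<epsilon>"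
    and UC2: "\<And>m n w. m \<in> K \<Longrightarrow> n \<in> K \<Longrightarrow> \<rho> w \<noteq> 0 \<Longrightarrow>
       norm (\<omega> (mul (mul (mul m (mul x (iv m))) w) (mul n (mul y (iv n))))
             - \<omega> (mul (mul m (mul x (iv m))) (mul n (mul y (iv n))))) \<le> \<epsilon>"
  shows "norm ((\<integral>u. kernel x u * smoothed \<omega> y u \<partial>mu)
      - complex_of_real (bump_mass\<^sup>2) * orbit_integral \<omega> x y) \<le> 2 * bump_mass\<^sup>2 * \<epsilon>"
proof -
  let ?R = "complex_of_real bump_mass"
  let ?\<Psi> = "orbit_average \<omega> y"
  have Ic: "continuous_on UNIV (smoothed \<omega> y)" by (rule continuous_on_smoothed[OF w])
  have \<Psi>c: "continuous_on UNIV ?\<Psi>" by (rule continuous_on_orbit_average[OF w])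
  have smoothed_close: "norm (smoothed \<omega> y u - ?R * ?\<Psi> u) \<le> bump_mass * \<epsilon>"
    if u: "u \<in> kernel_support x" for u
  proof -
    have wu: "continuous_on UNIV (\<lambda>v. \<omega> (mul u v))"
      by (intro continuous_on_compose2[OF w] group_continuous_intros) auto
    show ?thesis
      using kernel_integral_estimate[OF wu, of y] UC1[OF u]
      by (simp add: smoothed_def orbit_average_def)
  qed
  have orbit_close: "norm ((\<integral>u. kernel x u * ?\<Psi> u \<partial>mu)
      - ?R * (\<integral>m. ?\<Psi> (mul m (mul x (iv m))) \<partial>dk)) \<le> bump_mass * \<epsilon>"
  proof (rule kernel_integral_estimate[OF \<Psi>c])
    fix m w assume m: "m \<in> K" and rw: "\<rho> w \<noteq> 0"
    define a where "a = mul m (mul x (iv m))"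
    have c1: "continuous_on UNIV (\<lambda>n. \<omega> (mul (mul a w) (mul n (mul y (iv n)))))"
      and c2: "continuous_on UNIV (\<lambda>n. \<omega> (mul a (mul n (mul y (iv n)))))"
      by (intro continuous_on_compose2[OF w] group_continuous_intros; auto)+
    have "?\<Psi> (mul a w) - ?\<Psi> a =
       (\<integral>n. \<omega> (mul (mul a w) (mul n (mul y (iv n)))) - \<omega> (mul a (mul n (mul y (iv n)))) \<partial>dk)"
      unfolding orbit_average_def using integrable_dk[OF c1] integrable_dk[OF c2] by simp
    also have "norm \<dots> \<le> \<epsilon>"
      by (rule norm_integral_dk_le)
        (use integrable_dk[OF c1] integrable_dk[OF c2] UC2[OF m _ rw] in \<open>auto simp: a_def\<close>)
    finally show "norm (?\<Psi> (mul a w) - ?\<Psi> a) \<le> \<epsilon>" unfolding a_def .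
  qed
  have "(\<integral>m. ?\<Psi> (mul m (mul x (iv m))) \<partial>dk) = (\<integral>m. orbit_integral \<omega> x y \<partial>dk)"
    by (rule integral_dk_cong)
      (auto intro!: continuous_on_compose2[OF \<Psi>c] group_continuous_intros simp: orbit_average_conj[OF kc w])
  then have orbit: "(\<integral>m. ?\<Psi> (mul m (mul x (iv m))) \<partial>dk) = orbit_integral \<omega> x y" by simp
  have first: "norm (\<integral>u. kernel x u * (smoothed \<omega> y u - ?R * ?\<Psi> u) \<partial>mu) \<le> bump_mass * \<epsilon> * bump_mass"
    by (intro norm_integral_kernel_mult_le smoothed_close continuous_intros Ic \<Psi>c)
  have "(\<integral>u. kernel x u * smoothed \<omega> y u \<partial>mu) - complex_of_real (bump_mass\<^sup>2) * orbit_integral \<omega> x y =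
      (\<integral>u. kernel x u * (smoothed \<omega> y u - ?R * ?\<Psi> u) \<partial>mu)
      + ?R * ((\<integral>u. kernel x u * ?\<Psi> u \<partial>mu) - ?R * (\<integral>m. ?\<Psi> (mul m (mul x (iv m))) \<partial>dk))"
    using integrable_kernel_mult[OF Ic] integrable_kernel_mult[OF \<Psi>c]
    by (simp add: orbit algebra_simps power2_eq_square)
  also have "norm \<dots> \<le> bump_mass * \<epsilon> * bump_mass + bump_mass * (bump_mass * \<epsilon>)"
    using first orbit_close bump_mass_pos
    by (intro order.trans[OF norm_triangle_ineq] add_mono) (auto simp: norm_mult intro: mult_left_mono)
  finally show ?thesis by (simp add: algebra_simps power2_eq_square)
qed

lemma orbit_integral_sym_approx:
  assumes cp: "central_pair mul iv mu K" and w: "continuous_on UNIV \<omega>" and kc: "K_central mul K \<omega>"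
    and \<epsilon>: "\<epsilon> \<ge> 0"
    and UC1: "\<And>a b u n w. (a, b) \<in> {(x, y), (y, x)} \<Longrightarrow> u \<in> kernel_support a \<Longrightarrow> n \<in> K \<Longrightarrow>
       \<rho> w \<noteq> 0 \<Longrightarrow>
       norm (\<omega> (mul u (mul (mul n (mul b (iv n))) w)) - \<omega> (mul u (mul n (mul b (iv n))))) \<le> \<epsilon>"
    and UC2: "\<And>a b m n w. (a, b) \<in> {(x, y), (y, x)} \<Longrightarrow> m \<in> K \<Longrightarrow> n \<in> K \<Longrightarrow> \<rho> w \<noteq> 0 \<Longrightarrow>
       norm (\<omega> (mul (mul (mul m (mul a (iv m))) w) (mul n (mul b (iv n))))
             - \<omega> (mul (mul m (mul a (iv m))) (mul n (mul b (iv n))))) \<le> \<epsilon>"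
  shows "norm (orbit_integral \<omega> x y - orbit_integral \<omega> y x) \<le> 4 * \<epsilon>"
proof -
  define r where "r = bump_mass\<^sup>2"
  have r: "r > 0" using bump_mass_pos by (simp add: r_def)
  define X where "X = (\<integral>u. kernel x u * smoothed \<omega> y u \<partial>mu)"
  have "convolution mul iv mu (kernel x) (kernel y) = convolution mul iv mu (kernel y) (kernel x)"
    using cp kernel_in_KK_space unfolding central_pair_def by blast
  then have X_sym: "X = (\<integral>u. kernel y u * smoothed \<omega> x u \<partial>mu)"
    unfolding X_def using integral_mult_convolution[OF w, of x y] integral_mult_convolution[OF w, of y x]
    by simp
  have close_xy: "norm (X - complex_of_real r * orbit_integral \<omega> x y) \<le> 2 * r * \<epsilon>"
    unfolding X_def r_def by (rule pairing_approximates_orbit_integral[OF w kc \<epsilon>]) (rule UC1 UC2; simp)+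
  have close_yx: "norm (X - complex_of_real r * orbit_integral \<omega> y x) \<le> 2 * r * \<epsilon>"
    unfolding X_sym r_def by (rule pairing_approximates_orbit_integral[OF w kc \<epsilon>]) (rule UC1 UC2; simp)+
  have "complex_of_real r * (orbit_integral \<omega> x y - orbit_integral \<omega> y x)
      = (X - complex_of_real r * orbit_integral \<omega> y x) - (X - complex_of_real r * orbit_integral \<omega> x y)"
    by (simp add: algebra_simps)
  then have "r * norm (orbit_integral \<omega> x y - orbit_integral \<omega> y x)
      = norm ((X - complex_of_real r * orbit_integral \<omega> y x) - (X - complex_of_real r * orbit_integral \<omega> x y))"
    using r by (metis abs_of_pos norm_mult norm_of_real)
  also have "\<dots> \<le> 2 * r * \<epsilon> + 2 * r * \<epsilon>"
    by (rule order.trans[OF norm_triangle_ineq4 add_mono[OF close_yx close_xy]])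
  finally show ?thesis using r by (simp add: algebra_simps)
qed

end

context haar_setting
begin

lemma exists_nhd_small_variation:
  fixes \<omega> :: "'g \<Rightarrow> complex"
  assumes w: "continuous_on UNIV \<omega>" and S: "compact S" and \<epsilon>: "\<epsilon> > 0"
  obtains V where "open V" "e \<in> V"
    "\<And>u n w. u \<in> S \<Longrightarrow> n \<in> K \<Longrightarrow> w \<in> V \<Longrightarrow>
      norm (\<omega> (mul u (mul (mul n (mul b (iv n))) w)) - \<omega> (mul u (mul n (mul b (iv n))))) \<le> \<epsilon>"
    "\<And>m n w. m \<in> K \<Longrightarrow> n \<in> K \<Longrightarrow> w \<in> V \<Longrightarrow>
      norm (\<omega> (mul (mul (mul m (mul a (iv m))) w) (mul n (mul b (iv n))))
        - \<omega> (mul (mul m (mul a (iv m))) (mul n (mul b (iv n))))) \<le> \<epsilon>"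
proof -
  define \<Gamma>1 where "\<Gamma>1 q = \<omega> (mul (fst (fst q)) (mul (mul (snd (fst q)) (mul b (iv (snd (fst q))))) (snd q)))"
    for q :: "('g \<times> 'g) \<times> 'g"
  define \<Gamma>2 where "\<Gamma>2 q = \<omega> (mul (mul (mul (fst (fst q)) (mul a (iv (fst (fst q))))) (snd q))
      (mul (snd (fst q)) (mul b (iv (snd (fst q))))))" for q :: "('g \<times> 'g) \<times> 'g"
  have "continuous_on UNIV \<Gamma>1" "continuous_on UNIV \<Gamma>2"
    unfolding \<Gamma>1_def \<Gamma>2_def by (intro continuous_on_compose2[OF w] group_continuous_intros; auto)+
  then obtain V1 V2 where V: "open V1" "e \<in> V1" "open V2" "e \<in> V2"
    and V1: "\<And>p w. p \<in> S \<times> K \<Longrightarrow> w \<in> V1 \<Longrightarrow> norm (\<Gamma>1 (p, w) - \<Gamma>1 (p, e)) \<le> \<epsilon>"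
    and V2: "\<And>p w. p \<in> K \<times> K \<Longrightarrow> w \<in> V2 \<Longrightarrow> norm (\<Gamma>2 (p, w) - \<Gamma>2 (p, e)) \<le> \<epsilon>"
    using uniform_continuity_at_unit[OF compact_Times[OF S K_compact] _ \<epsilon>, of \<Gamma>1]
      uniform_continuity_at_unit[OF compact_Times[OF K_compact K_compact] _ \<epsilon>, of \<Gamma>2]
    by metis
  show ?thesis
  proof (rule that[of "V1 \<inter> V2"])
    show "open (V1 \<inter> V2)" by (rule open_Int[OF V(1,3)])
    show "e \<in> V1 \<inter> V2" using V(2,4) by blast
    show "norm (\<omega> (mul u (mul (mul n (mul b (iv n))) w)) - \<omega> (mul u (mul n (mul b (iv n))))) \<le> \<epsilon>"
      if "u \<in> S" "n \<in> K" "w \<in> V1 \<inter> V2" for u n w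
      using V1[of "(u, n)" w] that by (simp add: \<Gamma>1_def)
    show "norm (\<omega> (mul (mul (mul m (mul a (iv m))) w) (mul n (mul b (iv n))))
        - \<omega> (mul (mul m (mul a (iv m))) (mul n (mul b (iv n))))) \<le> \<epsilon>"
      if "m \<in> K" "n \<in> K" "w \<in> V1 \<inter> V2" for m n w
      using V2[of "(m, n)" w] that by (simp add: \<Gamma>2_def)
  qed
qed

text \<open>The compact set \<open>C\<close> bounding the supports of all bumps is fixed first, so that the
  neighbourhoods of small variation, chosen on the compact sets \<open>kernel_support\<close>, do not depend on
  the bump that is then taken inside them.\<close>
lemma orbit_integral_sym_le:
  assumes cp: "central_pair mul iv mu K" and w: "continuous_on UNIV \<omega>" and kc: "K_central mul K \<omega>"
    and \<epsilon>: "\<epsilon> > 0"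
  shows "norm (orbit_integral \<omega> x y - orbit_integral \<omega> y x) \<le> 4 * \<epsilon>"
proof -
  obtain U C where UC: "open U" "compact C" "e \<in> U" "U \<subseteq> C" using locally_compact_nhd by blast
  define S where "S z = (\<lambda>q. mul (fst q) (mul z (mul (iv (fst q)) (snd q)))) ` (K \<times> C)" for z
  have S_compact: "compact (S z)" for z
    unfolding S_def by (intro compact_continuous_image compact_Times K_compact UC(2))
      (auto intro!: group_continuous_intros)
  obtain Vxy where Vxy: "open Vxy" "e \<in> Vxy"
    "\<And>u n w. u \<in> S x \<Longrightarrow> n \<in> K \<Longrightarrow> w \<in> Vxy \<Longrightarrow>
      norm (\<omega> (mul u (mul (mul n (mul y (iv n))) w)) - \<omega> (mul u (mul n (mul y (iv n))))) \<le> \<epsilon>"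
    "\<And>m n w. m \<in> K \<Longrightarrow> n \<in> K \<Longrightarrow> w \<in> Vxy \<Longrightarrow>
      norm (\<omega> (mul (mul (mul m (mul x (iv m))) w) (mul n (mul y (iv n))))
        - \<omega> (mul (mul m (mul x (iv m))) (mul n (mul y (iv n))))) \<le> \<epsilon>"
    by (rule exists_nhd_small_variation[OF w S_compact[of x] \<epsilon>, where a = x and b = y]) blast
  obtain Vyx where Vyx: "open Vyx" "e \<in> Vyx"
    "\<And>u n w. u \<in> S y \<Longrightarrow> n \<in> K \<Longrightarrow> w \<in> Vyx \<Longrightarrow>
      norm (\<omega> (mul u (mul (mul n (mul x (iv n))) w)) - \<omega> (mul u (mul n (mul x (iv n))))) \<le> \<epsilon>"
    "\<And>m n w. m \<in> K \<Longrightarrow> n \<in> K \<Longrightarrow> w \<in> Vyx \<Longrightarrow>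
      norm (\<omega> (mul (mul (mul m (mul y (iv m))) w) (mul n (mul x (iv n))))
        - \<omega> (mul (mul m (mul y (iv m))) (mul n (mul x (iv n))))) \<le> \<epsilon>"
    by (rule exists_nhd_small_variation[OF w S_compact[of y] \<epsilon>, where a = y and b = x]) blast
  define V where "V = U \<inter> Vxy \<inter> Vyx"
  have V: "open V" "e \<in> V" using UC Vxy Vyx by (auto simp: V_def)
  obtain \<rho> :: "'g \<Rightarrow> real" where \<rho>: "continuous_on UNIV \<rho>" "\<And>x. 0 \<le> \<rho> x" "\<rho> e = 1"
    "\<And>x. x \<notin> V \<Longrightarrow> \<rho> x = 0" "\<And>k a. k \<in> K \<Longrightarrow> \<rho> (mul k (mul a (iv k))) = \<rho> a"
    using exists_invariant_bump[OF V] by metis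
  interpret bump: invariant_bump mul e iv mu dk K \<rho> C
  proof
    show "\<rho> z = 0" if "z \<notin> C" for z
      using that UC(4) by (intro \<rho>(4)) (auto simp: V_def)
  qed (use \<rho> UC in auto)
  have in_V: "w \<in> Vxy" "w \<in> Vyx" if "\<rho> w \<noteq> 0" for w
    using \<rho>(4) that by (auto simp: V_def)
  have S_eq: "bump.kernel_support z = S z" for z
    by (simp add: S_def bump.kernel_support_def)
  show ?thesis
  proof (rule bump.orbit_integral_sym_approx[OF cp w kc])
    fix a b u n w
    assume "(a, b) \<in> {(x, y), (y, x)}" "u \<in> bump.kernel_support a" "n \<in> K" "\<rho> w \<noteq> 0"
    then show "norm (\<omega> (mul u (mul (mul n (mul b (iv n))) w)) - \<omega> (mul u (mul n (mul b (iv n))))) \<le> \<epsilon>"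
      using Vxy(3)[of u n w] Vyx(3)[of u n w] in_V[of w] by (auto simp: S_eq)
  next
    fix a b m n w
    assume "(a, b) \<in> {(x, y), (y, x)}" "m \<in> K" "n \<in> K" "\<rho> w \<noteq> 0"
    then show "norm (\<omega> (mul (mul (mul m (mul a (iv m))) w) (mul n (mul b (iv n))))
        - \<omega> (mul (mul m (mul a (iv m))) (mul n (mul b (iv n))))) \<le> \<epsilon>"
      using Vxy(4)[of m n w] Vyx(4)[of m n w] in_V[of w] by auto
  qed (use \<epsilon> in simp)
qed

lemma orbit_integral_sym:
  assumes "central_pair mul iv mu K" "continuous_on UNIV \<omega>" "K_central mul K \<omega>"
  shows "orbit_integral \<omega> x y = orbit_integral \<omega> y x"
proof -
  have "norm (orbit_integral \<omega> x y - orbit_integral \<omega> y x) \<le> 0"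
  proof (rule field_le_epsilon)
    fix d :: real assume "d > 0"
    then show "norm (orbit_integral \<omega> x y - orbit_integral \<omega> y x) \<le> 0 + d"
      using orbit_integral_sym_le[OF assms, of "d / 4"] by simp
  qed
  then show ?thesis by simp
qed

end

lemma symmetric_sine_type_equation_iff:
  fixes \<Phi> :: "'a \<Rightarrow> 'a \<Rightarrow> 'b::field_char_0"
  assumes sym: "\<And>x y. \<Phi> x y = \<Phi> y x"
  shows "(\<forall>x y. \<Phi> x y + \<Phi> y x = 2 * g x * f y + 2 * g y * f x)
     \<longleftrightarrow> (\<forall>x y. \<Phi> x y = g x * f y + g y * f x)"
proof -
  have "\<Phi> x y + \<Phi> y x = 2 * g x * f y + 2 * g y * f x \<longleftrightarrow> \<Phi> x y = g x * f y + g y * f x" for x y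
  proof -
    have "\<Phi> x y + \<Phi> y x = 2 * \<Phi> x y" using sym[of y x] by simp
    moreover have "2 * g x * f y + 2 * g y * f x = 2 * (g x * f y + g y * f x)"
      by (simp add: algebra_simps)
    ultimately show ?thesis by (metis mult_cancel_left zero_neq_numeral)
  qed
  then show ?thesis by simp
qed

theorem corollary3p2:
  fixes mul :: "'g::t2_space \<Rightarrow> 'g \<Rightarrow> 'g" and e :: 'g and iv :: "'g \<Rightarrow> 'g"
    and mu dk :: "'g measure" and K :: "'g set"
    and \<omega> f :: "'g \<Rightarrow> complex"
  assumes "locally_compact_group mul e iv"
    and "left_haar_measure mul mu"
    and "compact_subgroup mul e iv K"
    and "normalized_haar_on mul K dk"
    and "central_pair mul iv mu K"
    and "continuous_on UNIV \<omega>" and "continuous_on UNIV f"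
    and "K_central mul K \<omega>"
  shows "(\<forall>x y. (\<integral>k. \<omega> (mul (mul x k) (mul y (iv k))) \<partial>dk)
                + (\<integral>k. \<omega> (mul (mul y k) (mul x (iv k))) \<partial>dk)
              = 2 * \<omega> x * f y + 2 * \<omega> y * f x)
     \<longleftrightarrow> (\<forall>x y. (\<integral>k. \<omega> (mul (mul x k) (mul y (iv k))) \<partial>dk)
              = \<omega> x * f y + \<omega> y * f x)"
proof -
  interpret haar_setting mul e iv mu dk K
    using assms(1-4) by unfold_locales
  have "\<And>x y. orbit_integral \<omega> x y = orbit_integral \<omega> y x"
    by (rule orbit_integral_sym[OF assms(5,6,8)])
  from symmetric_sine_type_equation_iff[OF this, where g = \<omega> and f = f] show ?thesis
    unfolding orbit_integral_def .
qed

end
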